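(* Let $N$ be a graded ideal of a Lie superalgebra $L$. Then $N\subseteq Z^{\wedge}(L)$ if and only if the natural map $L\wedge L\to (L/N)\wedge(L/N)$, $x\wedge y\mapsto (x+N)\wedge(y+N)$, is a monomorphism.
   Context: All algebras are over a field $\mathbb{F}$ of characteristic $\neq 2,3$. Non-abelian tensor square: $L\otimes L$ is the Lie superalgebra generated by symbols $x\otimes y$ ($x,y$ homogeneous, $|x\otimes y|=|x|+|y|$) subject to bilinearity, $[x,x']\otimes y=x\otimes[x',y]-(-1)^{|x||x'|}x'\otimes[x,y]$, $x\otimes[y,y']=(-1)^{|y'|(|x|+|y|)}[y',x]\otimes y-(-1)^{|x||y|}[y,x]\otimes y'$, and $[x\otimes y,x'\otimes y']=-(-1)^{|x||y|}[y,x]\otimes[x',y']$. The exterior square is $L\wedge L=(L\otimes L)/(L\square L)$, where $L\square L$ is the graded ideal generated by $x\otimes y+(-1)^{|x||y|}y\otimes x$ for homogeneous $x,y$ and by $x_0\otimes x_0$ for $x_0\in L_{\bar 0}$; the image of $x\otimes y$ is written $x\wedge y$. The exterior center is $Z^{\wedge}(L)=\{x\in L: x\wedge y=0 \text{ for all } y\in L\}$. *)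

theory Defs
  imports Main
begin

record ('k, 'a) lsa =
  lcarr :: "'a set"
  lzero :: 'a
  ladd  :: "'a \<Rightarrow> 'a \<Rightarrow> 'a"
  lneg  :: "'a \<Rightarrow> 'a"
  lsmul :: "'k \<Rightarrow> 'a \<Rightarrow> 'a"
  lbr   :: "'a \<Rightarrow> 'a \<Rightarrow> 'a"
  lev   :: "'a set"
  lod   :: "'a set"

definition lhom :: "('k, 'a, 'b) lsa_scheme \<Rightarrow> 'a set" where
  "lhom L = lev L \<union> lod L"

text \<open>degree of a homogeneous element (0 is taken to be even)\<close>
definition ldeg :: "('k, 'a, 'b) lsa_scheme \<Rightarrow> 'a \<Rightarrow> nat" where
  "ldeg L x = (if x \<in> lev L then 0 else 1)"

definition lsign :: "('k::field, 'a, 'b) lsa_scheme \<Rightarrow> 'a \<Rightarrow> 'a \<Rightarrow> 'k" where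
  "lsign L x y = (-1) ^ (ldeg L x * ldeg L y)"

definition lsub :: "('k, 'a, 'b) lsa_scheme \<Rightarrow> 'a \<Rightarrow> 'a \<Rightarrow> 'a" where
  "lsub L x y = ladd L x (lneg L y)"

definition subspace_of :: "('k, 'a, 'b) lsa_scheme \<Rightarrow> 'a set \<Rightarrow> bool" where
  "subspace_of L S \<longleftrightarrow> S \<subseteq> lcarr L \<and> lzero L \<in> S \<and>
     (\<forall>x\<in>S. \<forall>y\<in>S. ladd L x y \<in> S) \<and> (\<forall>c. \<forall>x\<in>S. lsmul L c x \<in> S)"

definition is_lsa :: "('k::field, 'a, 'b) lsa_scheme \<Rightarrow> bool" where
  "is_lsa L \<longleftrightarrow>
     \<comment> \<open>vector space over 'k\<close>
     lzero L \<in> lcarr L \<and>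
     (\<forall>x\<in>lcarr L. \<forall>y\<in>lcarr L. ladd L x y \<in> lcarr L) \<and>
     (\<forall>x\<in>lcarr L. lneg L x \<in> lcarr L) \<and>
     (\<forall>c. \<forall>x\<in>lcarr L. lsmul L c x \<in> lcarr L) \<and>
     (\<forall>x\<in>lcarr L. \<forall>y\<in>lcarr L. \<forall>z\<in>lcarr L. ladd L (ladd L x y) z = ladd L x (ladd L y z)) \<and>
     (\<forall>x\<in>lcarr L. \<forall>y\<in>lcarr L. ladd L x y = ladd L y x) \<and>
     (\<forall>x\<in>lcarr L. ladd L x (lzero L) = x) \<and>
     (\<forall>x\<in>lcarr L. ladd L x (lneg L x) = lzero L) \<and>
     (\<forall>a. \<forall>x\<in>lcarr L. \<forall>y\<in>lcarr L. lsmul L a (ladd L x y) = ladd L (lsmul L a x) (lsmul L a y)) \<and>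
     (\<forall>a b. \<forall>x\<in>lcarr L. lsmul L (a + b) x = ladd L (lsmul L a x) (lsmul L b x)) \<and>
     (\<forall>a b. \<forall>x\<in>lcarr L. lsmul L (a * b) x = lsmul L a (lsmul L b x)) \<and>
     (\<forall>x\<in>lcarr L. lsmul L 1 x = x) \<and>
     \<comment> \<open>Z/2-grading L = L_0 (+) L_1\<close>
     subspace_of L (lev L) \<and> subspace_of L (lod L) \<and>
     lev L \<inter> lod L = {lzero L} \<and>
     (\<forall>x\<in>lcarr L. \<exists>a\<in>lev L. \<exists>b\<in>lod L. x = ladd L a b) \<and>
     \<comment> \<open>bilinear graded bracket\<close>
     (\<forall>x\<in>lcarr L. \<forall>y\<in>lcarr L. lbr L x y \<in> lcarr L) \<and>
     (\<forall>x\<in>lcarr L. \<forall>y\<in>lcarr L. \<forall>z\<in>lcarr L.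
        lbr L (ladd L x y) z = ladd L (lbr L x z) (lbr L y z) \<and>
        lbr L z (ladd L x y) = ladd L (lbr L z x) (lbr L z y)) \<and>
     (\<forall>c. \<forall>x\<in>lcarr L. \<forall>y\<in>lcarr L.
        lbr L (lsmul L c x) y = lsmul L c (lbr L x y) \<and>
        lbr L x (lsmul L c y) = lsmul L c (lbr L x y)) \<and>
     (\<forall>x\<in>lev L. \<forall>y\<in>lev L. lbr L x y \<in> lev L) \<and>
     (\<forall>x\<in>lev L. \<forall>y\<in>lod L. lbr L x y \<in> lod L \<and> lbr L y x \<in> lod L) \<and>
     (\<forall>x\<in>lod L. \<forall>y\<in>lod L. lbr L x y \<in> lev L) \<and>
     \<comment> \<open>super skew-symmetry and super Jacobi identity (homogeneous elements)\<close>
     (\<forall>x\<in>lhom L. \<forall>y\<in>lhom L. lbr L x y = lneg L (lsmul L (lsign L x y) (lbr L y x))) \<and>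
     (\<forall>x\<in>lhom L. \<forall>y\<in>lhom L. \<forall>z\<in>lhom L.
        ladd L (ladd L (lsmul L (lsign L x z) (lbr L x (lbr L y z)))
                       (lsmul L (lsign L y x) (lbr L y (lbr L z x))))
               (lsmul L (lsign L z y) (lbr L z (lbr L x y))) = lzero L)"

definition comp0 :: "('k, 'a, 'b) lsa_scheme \<Rightarrow> 'a \<Rightarrow> 'a" where
  "comp0 L x = (THE a. a \<in> lev L \<and> lsub L x a \<in> lod L)"

definition comp1 :: "('k, 'a, 'b) lsa_scheme \<Rightarrow> 'a \<Rightarrow> 'a" where
  "comp1 L x = lsub L x (comp0 L x)"

definition graded_ideal :: "('k, 'a, 'b) lsa_scheme \<Rightarrow> 'a set \<Rightarrow> bool" where
  "graded_ideal L N \<longleftrightarrow> subspace_of L N \<and> (\<forall>x\<in>N. comp0 L x \<in> N) \<and>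
     (\<forall>x\<in>lcarr L. \<forall>n\<in>N. lbr L x n \<in> N)"

definition coset :: "('k, 'a, 'b) lsa_scheme \<Rightarrow> 'a set \<Rightarrow> 'a \<Rightarrow> 'a set" where
  "coset L N x = {ladd L x n | n. n \<in> N}"

definition crep :: "('k, 'a, 'b) lsa_scheme \<Rightarrow> 'a set \<Rightarrow> 'a set \<Rightarrow> 'a" where
  "crep L N A = (SOME a. a \<in> lcarr L \<and> A = coset L N a)"

definition quot :: "('k, 'a, 'b) lsa_scheme \<Rightarrow> 'a set \<Rightarrow> ('k, 'a set) lsa" where
  "quot L N =
    \<lparr> lcarr = coset L N ` lcarr L,
      lzero = coset L N (lzero L),
      ladd = (\<lambda>A B. coset L N (ladd L (crep L N A) (crep L N B))),
      lneg = (\<lambda>A. coset L N (lneg L (crep L N A))),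
      lsmul = (\<lambda>c A. coset L N (lsmul L c (crep L N A))),
      lbr = (\<lambda>A B. coset L N (lbr L (crep L N A) (crep L N B))),
      lev = coset L N ` lev L,
      lod = coset L N ` lod L \<rparr>"

section \<open>Non-abelian tensor / exterior square by generators and relations\<close>

text \<open>The free 'k-vector space on symbols x (x) y with x, y homogeneous: finitely
  supported functions on pairs of homogeneous elements.\<close>

definition VL :: "('k::field, 'a, 'b) lsa_scheme \<Rightarrow> ('a \<times> 'a \<Rightarrow> 'k) set" where
  "VL L = {f. finite {p. f p \<noteq> 0} \<and> {p. f p \<noteq> 0} \<subseteq> lhom L \<times> lhom L}"

definition vsym :: "'a \<Rightarrow> 'a \<Rightarrow> ('a \<times> 'a \<Rightarrow> 'k::field)" where
  "vsym x y = (\<lambda>p. if p = (x, y) then 1 else 0)"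

definition vadd :: "('a \<times> 'a \<Rightarrow> 'k::field) \<Rightarrow> ('a \<times> 'a \<Rightarrow> 'k) \<Rightarrow> ('a \<times> 'a \<Rightarrow> 'k)" where
  "vadd f g = (\<lambda>p. f p + g p)"

definition vsmul :: "'k::field \<Rightarrow> ('a \<times> 'a \<Rightarrow> 'k) \<Rightarrow> ('a \<times> 'a \<Rightarrow> 'k)" where
  "vsmul c f = (\<lambda>p. c * f p)"

definition pdeg :: "('k, 'a, 'b) lsa_scheme \<Rightarrow> 'a \<times> 'a \<Rightarrow> nat" where
  "pdeg L p = (ldeg L (fst p) + ldeg L (snd p)) mod 2"

text \<open>Bracket on the span of the symbols, forced by the defining relation
  [x (x) y, x' (x) y'] = -(-1)^(|x||y|) [y,x] (x) [x',y'], extended bilinearly.\<close>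
definition vbr :: "('k::field, 'a, 'b) lsa_scheme \<Rightarrow> ('a \<times> 'a \<Rightarrow> 'k) \<Rightarrow> ('a \<times> 'a \<Rightarrow> 'k) \<Rightarrow> ('a \<times> 'a \<Rightarrow> 'k)" where
  "vbr L f g = (\<lambda>q. \<Sum>p1\<in>{p. f p \<noteq> 0}. \<Sum>p2\<in>{p. g p \<noteq> 0}.
      if q = (lbr L (snd p1) (fst p1), lbr L (fst p2) (snd p2))
      then - lsign L (fst p1) (snd p1) * f p1 * g p2 else 0)"

definition tens_rels :: "('k::field, 'a, 'b) lsa_scheme \<Rightarrow> ('a \<times> 'a \<Rightarrow> 'k) set" where
  "tens_rels L =
     \<comment> \<open>bilinearity\<close>
     {vadd (vsym (ladd L x x') y) (vsmul (-1) (vadd (vsym x y) (vsym x' y))) | x x' y.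
        ((x \<in> lev L \<and> x' \<in> lev L) \<or> (x \<in> lod L \<and> x' \<in> lod L)) \<and> y \<in> lhom L} \<union>
     {vadd (vsym y (ladd L x x')) (vsmul (-1) (vadd (vsym y x) (vsym y x'))) | x x' y.
        ((x \<in> lev L \<and> x' \<in> lev L) \<or> (x \<in> lod L \<and> x' \<in> lod L)) \<and> y \<in> lhom L} \<union>
     {vadd (vsym (lsmul L c x) y) (vsmul (- c) (vsym x y)) | c x y. x \<in> lhom L \<and> y \<in> lhom L} \<union>
     {vadd (vsym x (lsmul L c y)) (vsmul (- c) (vsym x y)) | c x y. x \<in> lhom L \<and> y \<in> lhom L} \<union>
     \<comment> \<open>[x,x'] (x) y = x (x) [x',y] - (-1)^(|x||x'|) x' (x) [x,y]\<close>
     {vadd (vsym (lbr L x x') y)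
        (vadd (vsmul (-1) (vsym x (lbr L x' y))) (vsmul (lsign L x x') (vsym x' (lbr L x y))))
        | x x' y. x \<in> lhom L \<and> x' \<in> lhom L \<and> y \<in> lhom L} \<union>
     \<comment> \<open>x (x) [y,y'] = (-1)^(|y'|(|x|+|y|)) [y',x] (x) y - (-1)^(|x||y|) [y,x] (x) y'\<close>
     {vadd (vsym x (lbr L y y'))
        (vadd (vsmul (- ((-1) ^ (ldeg L y' * (ldeg L x + ldeg L y)))) (vsym (lbr L y' x) y))
              (vsmul (lsign L x y) (vsym (lbr L y x) y')))
        | x y y'. x \<in> lhom L \<and> y \<in> lhom L \<and> y' \<in> lhom L}"

text \<open>super skew-symmetry and super Jacobi for the bracket on generators
  (these make the quotient a Lie superalgebra)\<close>
definition lsa_rels :: "('k::field, 'a, 'b) lsa_scheme \<Rightarrow> ('a \<times> 'a \<Rightarrow> 'k) set" where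
  "lsa_rels L =
     {vadd (vbr L (vsym (fst p) (snd p)) (vsym (fst q) (snd q)))
           (vsmul ((-1) ^ (pdeg L p * pdeg L q)) (vbr L (vsym (fst q) (snd q)) (vsym (fst p) (snd p))))
       | p q. p \<in> lhom L \<times> lhom L \<and> q \<in> lhom L \<times> lhom L} \<union>
     {(let a = vsym (fst p) (snd p); b = vsym (fst q) (snd q); c = vsym (fst r) (snd r) in
        vadd (vadd (vsmul ((-1) ^ (pdeg L p * pdeg L r)) (vbr L a (vbr L b c)))
                   (vsmul ((-1) ^ (pdeg L q * pdeg L p)) (vbr L b (vbr L c a))))
             (vsmul ((-1) ^ (pdeg L r * pdeg L q)) (vbr L c (vbr L a b))))
       | p q r. p \<in> lhom L \<times> lhom L \<and> q \<in> lhom L \<times> lhom L \<and> r \<in> lhom L \<times> lhom L}"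

inductive_set gen_ideal :: "('k::field, 'a, 'b) lsa_scheme \<Rightarrow> ('a \<times> 'a \<Rightarrow> 'k) set
    \<Rightarrow> ('a \<times> 'a \<Rightarrow> 'k) set" for L R where
  gen: "g \<in> R \<Longrightarrow> g \<in> gen_ideal L R"
| add: "f \<in> gen_ideal L R \<Longrightarrow> g \<in> gen_ideal L R \<Longrightarrow> vadd f g \<in> gen_ideal L R"
| smul: "f \<in> gen_ideal L R \<Longrightarrow> vsmul c f \<in> gen_ideal L R"
| brl: "f \<in> gen_ideal L R \<Longrightarrow> w \<in> VL L \<Longrightarrow> vbr L w f \<in> gen_ideal L R"
| brr: "f \<in> gen_ideal L R \<Longrightarrow> w \<in> VL L \<Longrightarrow> vbr L f w \<in> gen_ideal L R"

text \<open>L (x) L = VL L / tens_ideal L\<close>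
definition tens_ideal :: "('k::field, 'a, 'b) lsa_scheme \<Rightarrow> ('a \<times> 'a \<Rightarrow> 'k) set" where
  "tens_ideal L = gen_ideal L (tens_rels L \<union> lsa_rels L)"

text \<open>generators of L [] L: x (x) y + (-1)^(|x||y|) y (x) x and x0 (x) x0\<close>
definition box_rels :: "('k::field, 'a, 'b) lsa_scheme \<Rightarrow> ('a \<times> 'a \<Rightarrow> 'k) set" where
  "box_rels L =
     {vadd (vsym x y) (vsmul (lsign L x y) (vsym y x)) | x y. x \<in> lhom L \<and> y \<in> lhom L} \<union>
     {vsym x x | x. x \<in> lev L}"

text \<open>L /\ L = (L (x) L)/(L [] L) = VL L / wedge_ideal L\<close>
definition wedge_ideal :: "('k::field, 'a, 'b) lsa_scheme \<Rightarrow> ('a \<times> 'a \<Rightarrow> 'k) set" where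
  "wedge_ideal L = gen_ideal L (tens_rels L \<union> lsa_rels L \<union> box_rels L)"

text \<open>representative of x /\ y for arbitrary (not necessarily homogeneous) x, y, by bilinearity\<close>
definition wedge_elt :: "('k::field, 'a, 'b) lsa_scheme \<Rightarrow> 'a \<Rightarrow> 'a \<Rightarrow> ('a \<times> 'a \<Rightarrow> 'k)" where
  "wedge_elt L x y =
     vadd (vadd (vsym (comp0 L x) (comp0 L y)) (vsym (comp0 L x) (comp1 L y)))
          (vadd (vsym (comp1 L x) (comp0 L y)) (vsym (comp1 L x) (comp1 L y)))"

definition ext_center :: "('k::field, 'a, 'b) lsa_scheme \<Rightarrow> 'a set" where
  "ext_center L = {x \<in> lcarr L. \<forall>y\<in>lcarr L. wedge_elt L x y \<in> wedge_ideal L}"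

definition nat_push :: "('k::field, 'a, 'b) lsa_scheme \<Rightarrow> 'a set \<Rightarrow> ('a \<times> 'a \<Rightarrow> 'k)
    \<Rightarrow> ('a set \<times> 'a set \<Rightarrow> 'k)" where
  "nat_push L N f = (\<lambda>Q. \<Sum>p\<in>{p. f p \<noteq> 0 \<and> (coset L N (fst p), coset L N (snd p)) = Q}. f p)"

definition nat_wedge_map_mono :: "('k::field, 'a, 'b) lsa_scheme \<Rightarrow> 'a set \<Rightarrow> bool" where
  "nat_wedge_map_mono L N \<longleftrightarrow>
     (\<forall>f\<in>VL L. nat_push L N f \<in> (wedge_ideal (quot L N) :: ('a set \<times> 'a set \<Rightarrow> 'k) set)
        \<longrightarrow> f \<in> wedge_ideal L)"

end

theory Submission
  imports Defs
begin

(* For every homogeneous class X of L/N choose a representative rep X of the same degree.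
   If N lies in the exterior centre, then n /\ y = 0 for homogeneous n in N, so modulo the
   relations of L /\ L a symbol a (x) b depends only on the classes of a and b; hence every
   element f of the free space is congruent to the lift of its image. Every relation of
   (L/N) /\ (L/N) is the image of a relation of L /\ L: for the defining relations substitute
   representatives, and the ideal operations can be lifted through rep because it preserves
   degrees, on which the signs of the bracket depend. So if the image of f is a relation, so
   is its lift, and therefore f. Conversely, if the natural map is injective, n /\ y with n in N
   maps to (0 + N) /\ (y + N) = 0 and hence vanishes already in L /\ L. *)

section \<open>Formal linear combinations of pairs\<close>

definition supp :: "('x \<Rightarrow> 'k::zero) \<Rightarrow> 'x set" where
  "supp F = {p. F p \<noteq> 0}"

definition vsum :: "'i set \<Rightarrow> ('i \<Rightarrow> 'x \<Rightarrow> 'k::comm_monoid_add) \<Rightarrow> 'x \<Rightarrow> 'k" where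
  "vsum A g = (\<lambda>p. \<Sum>i\<in>A. g i p)"

definition vsub :: "('x \<Rightarrow> 'k::ab_group_add) \<Rightarrow> ('x \<Rightarrow> 'k) \<Rightarrow> 'x \<Rightarrow> 'k" where
  "vsub F G = (\<lambda>p. F p - G p)"

definition vunit :: "'a \<times> 'a \<Rightarrow> 'a \<times> 'a \<Rightarrow> 'k::field" where
  "vunit q = vsym (fst q) (snd q)"

definition vmap :: "('a \<times> 'a \<Rightarrow> 'c \<times> 'c) \<Rightarrow> ('a \<times> 'a \<Rightarrow> 'k::field) \<Rightarrow> 'c \<times> 'c \<Rightarrow> 'k" where
  "vmap h F = vsum (supp F) (\<lambda>p. vsmul (F p) (vunit (h p)))"

definition br_pair :: "('k, 'a, 'b) lsa_scheme \<Rightarrow> 'a \<times> 'a \<Rightarrow> 'a \<times> 'a \<Rightarrow> 'a \<times> 'a" where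
  "br_pair L p t = (lbr L (snd p) (fst p), lbr L (fst t) (snd t))"

lemma vunit_apply: "vunit q p = (if p = q then 1 else 0)"
  by (simp add: vunit_def vsym_def)

lemma supp_vsym [simp]: "supp (vsym x y :: _ \<Rightarrow> 'k::field) = {(x, y)}"
  by (auto simp: supp_def vsym_def)

lemma supp_vunit [simp]: "supp (vunit q :: _ \<Rightarrow> 'k::field) = {q}"
  by (auto simp: supp_def vunit_apply)

lemma supp_zero [simp]: "supp (\<lambda>p. 0) = {}"
  by (simp add: supp_def)

lemma supp_vadd: "supp (vadd f g) \<subseteq> supp f \<union> supp g"
  by (auto simp: supp_def vadd_def)

lemma supp_vsmul: "supp (vsmul c f) \<subseteq> supp f"
  by (auto simp: supp_def vsmul_def)

lemma finite_supp_vadd [simp]: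
  "finite (supp f) \<Longrightarrow> finite (supp g) \<Longrightarrow> finite (supp (vadd f g))"
  by (rule finite_subset[OF supp_vadd]) auto

lemma finite_supp_vsmul [simp]: "finite (supp f) \<Longrightarrow> finite (supp (vsmul c f))"
  by (rule finite_subset[OF supp_vsmul])

lemma supp_vsum: "supp (vsum A g) \<subseteq> (\<Union>i\<in>A. supp (g i))"
  by (auto simp: supp_def vsum_def elim!: sum.not_neutral_contains_not_neutral)

lemma finite_supp_vsum [intro]:
  "finite A \<Longrightarrow> (\<And>i. i \<in> A \<Longrightarrow> finite (supp (g i))) \<Longrightarrow> finite (supp (vsum A g))"
  by (rule finite_subset[OF supp_vsum]) auto

lemma vsum_empty [simp]: "vsum {} g = (\<lambda>p. 0)"
  by (simp add: vsum_def)

lemma vsum_insert: "finite A \<Longrightarrow> a \<notin> A \<Longrightarrow> vsum (insert a A) g = vadd (g a) (vsum A g)"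
  by (simp add: vsum_def vadd_def)

lemma vsum_cong: "(\<And>i. i \<in> A \<Longrightarrow> g i = g' i) \<Longrightarrow> vsum A g = vsum A g'"
  by (simp add: vsum_def)

lemma vsum_expand:
  assumes "finite S" "supp f \<subseteq> S"
  shows "f = vsum S (\<lambda>p. vsmul (f p) (vunit p))"
proof
  fix q
  have "vsum S (\<lambda>p. vsmul (f p) (vunit p)) q = (\<Sum>p\<in>S. if q = p then f p else 0)"
    by (auto simp: vsum_def vsmul_def vunit_apply intro!: sum.cong)
  also have "\<dots> = f q"
    using assms by (auto simp: supp_def)
  finally show "f q = vsum S (\<lambda>p. vsmul (f p) (vunit p)) q" by simp
qed

lemma vsub_eq_vadd: "vsub F G = vadd F (vsmul (-1) G)"
  by (simp add: vsub_def vadd_def vsmul_def)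

lemma vsub_vsub_cancel: "vsub F (vsub F G) = G"
  by (simp add: vsub_def)

lemma vbr_vunit:
  "vbr L (vunit p) (vunit t) = vsmul (- lsign L (fst p) (snd p)) (vunit (br_pair L p t))"
  by (rule ext) (simp add: vbr_def vsmul_def vunit_apply br_pair_def supp_vunit[unfolded supp_def])

lemma vbr_eq_sum:
  assumes "finite S" "finite T" "supp f \<subseteq> S" "supp g \<subseteq> T"
  shows "vbr L f g q = (\<Sum>p\<in>S. \<Sum>t\<in>T. f p * g t * vbr L (vunit p) (vunit t) q)"
proof -
  have "vbr L f g q = (\<Sum>p\<in>supp f. \<Sum>t\<in>supp g. f p * g t * vbr L (vunit p) (vunit t) q)"
    by (auto simp: vbr_def supp_def vbr_vunit vsmul_def vunit_apply br_pair_def intro!: sum.cong)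
  also have "\<dots> = (\<Sum>p\<in>S. \<Sum>t\<in>supp g. f p * g t * vbr L (vunit p) (vunit t) q)"
    using assms by (intro sum.mono_neutral_left) (auto simp: supp_def)
  also have "\<dots> = (\<Sum>p\<in>S. \<Sum>t\<in>T. f p * g t * vbr L (vunit p) (vunit t) q)"
    using assms by (intro sum.cong refl sum.mono_neutral_left) (auto simp: supp_def)
  finally show ?thesis .
qed

lemma supp_vbr:
  assumes "finite (supp f)" "finite (supp g)"
  shows "supp (vbr L f g) \<subseteq> (\<lambda>(p, t). br_pair L p t) ` (supp f \<times> supp g)"
proof
  fix q assume "q \<in> supp (vbr L f g)"
  then have "vbr L f g q \<noteq> 0" by (simp add: supp_def)
  then have "(\<Sum>p\<in>supp f. \<Sum>t\<in>supp g. f p * g t * vbr L (vunit p) (vunit t) q) \<noteq> 0"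
    by (metis vbr_eq_sum[OF assms subset_refl subset_refl])
  then obtain p t where "p \<in> supp f" "t \<in> supp g" "vbr L (vunit p) (vunit t) q \<noteq> 0"
    by (auto elim!: sum.not_neutral_contains_not_neutral)
  then have "p \<in> supp f" "t \<in> supp g" "q = br_pair L p t"
    by (auto simp: vbr_vunit vsmul_def vunit_apply split: if_splits)
  then show "q \<in> (\<lambda>(p, t). br_pair L p t) ` (supp f \<times> supp g)" by force
qed

lemma finite_supp_vbr [simp]:
  "finite (supp f) \<Longrightarrow> finite (supp g) \<Longrightarrow> finite (supp (vbr L f g))"
  by (rule finite_subset[OF supp_vbr]) auto

lemma vbr_vadd_left:
  assumes "finite (supp f1)" "finite (supp f2)" "finite (supp g)"
  shows "vbr L (vadd f1 f2) g = vadd (vbr L f1 g) (vbr L f2 g)"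
proof
  fix q
  let ?S = "supp f1 \<union> supp f2"
  show "vbr L (vadd f1 f2) g q = vadd (vbr L f1 g) (vbr L f2 g) q"
    using assms supp_vadd[of f1 f2]
    by (simp add: vadd_def vbr_eq_sum[of ?S "supp g"] ring_distribs sum.distrib)
qed

lemma vbr_vadd_right:
  assumes "finite (supp f)" "finite (supp g1)" "finite (supp g2)"
  shows "vbr L f (vadd g1 g2) = vadd (vbr L f g1) (vbr L f g2)"
proof
  fix q
  let ?T = "supp g1 \<union> supp g2"
  show "vbr L f (vadd g1 g2) q = vadd (vbr L f g1) (vbr L f g2) q"
    using assms supp_vadd[of g1 g2]
    by (simp add: vadd_def vbr_eq_sum[of "supp f" ?T] ring_distribs sum.distrib)
qed

lemma vbr_vsmul_left:
  assumes "finite (supp f)" "finite (supp g)"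
  shows "vbr L (vsmul c f) g = vsmul c (vbr L f g)"
proof
  fix q
  show "vbr L (vsmul c f) g q = vsmul c (vbr L f g) q"
    using assms supp_vsmul[of c f]
    by (simp add: vsmul_def vbr_eq_sum[of "supp f" "supp g"] sum_distrib_left mult.assoc)
qed

lemma vbr_vsmul_right:
  assumes "finite (supp f)" "finite (supp g)"
  shows "vbr L f (vsmul c g) = vsmul c (vbr L f g)"
proof
  fix q
  show "vbr L f (vsmul c g) q = vsmul c (vbr L f g) q"
    using assms supp_vsmul[of c g]
    by (simp add: vsmul_def vbr_eq_sum[of "supp f" "supp g"] sum_distrib_left algebra_simps)
qed

lemma vbr_vsum_left:
  assumes "finite A" "\<And>i. i \<in> A \<Longrightarrow> finite (supp (g i))" "finite (supp h)"
  shows "vbr L (vsum A g) h = vsum A (\<lambda>i. vbr L (g i) h)"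
  using assms
proof (induction A rule: finite_induct)
  case empty
  then show ?case by (simp add: vbr_def)
next
  case (insert a A)
  then show ?case by (simp add: vsum_insert vbr_vadd_left finite_supp_vsum)
qed

lemma vbr_vsum_right:
  assumes "finite A" "\<And>i. i \<in> A \<Longrightarrow> finite (supp (g i))" "finite (supp h)"
  shows "vbr L h (vsum A g) = vsum A (\<lambda>i. vbr L h (g i))"
  using assms
proof (induction A rule: finite_induct)
  case empty
  then show ?case by (simp add: vbr_def)
next
  case (insert a A)
  then show ?case by (simp add: vsum_insert vbr_vadd_right finite_supp_vsum)
qed

lemma vbr_vsum_vsum:
  assumes "finite A" "finite B"
  shows "vbr L (vsum A (\<lambda>i. vsmul (c i) (vunit (h i)))) (vsum B (\<lambda>j. vsmul (d j) (vunit (k j))))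
       = vsum A (\<lambda>i. vsum B (\<lambda>j. vsmul (c i * d j) (vbr L (vunit (h i)) (vunit (k j)))))"
proof -
  have fin: "finite (supp (vsum B (\<lambda>j. vsmul (d j) (vunit (k j)))))"
    using assms by (intro finite_supp_vsum) auto
  show ?thesis
    using assms fin
    by (simp add: vbr_vsum_left vbr_vsmul_left vbr_vsum_right vbr_vsmul_right)
      (auto simp: vsum_def vsmul_def sum_distrib_left mult.assoc mult.left_commute)
qed

lemma vmap_superset:
  assumes "finite S" "supp F \<subseteq> S"
  shows "vmap h F = vsum S (\<lambda>p. vsmul (F p) (vunit (h p)))"
proof
  fix q
  show "vmap h F q = vsum S (\<lambda>p. vsmul (F p) (vunit (h p))) q"
    unfolding vmap_def vsum_def
    using assms by (intro sum.mono_neutral_left) (auto simp: supp_def vsmul_def)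
qed

lemma vmap_vadd:
  assumes "finite (supp F)" "finite (supp G)"
  shows "vmap h (vadd F G) = vadd (vmap h F) (vmap h G)"
proof -
  let ?S = "supp F \<union> supp G"
  have "vmap h (vadd F G) = vsum ?S (\<lambda>p. vsmul (vadd F G p) (vunit (h p)))"
    using assms supp_vadd by (intro vmap_superset) auto
  moreover have "vmap h F = vsum ?S (\<lambda>p. vsmul (F p) (vunit (h p)))"
    using assms by (intro vmap_superset) auto
  moreover have "vmap h G = vsum ?S (\<lambda>p. vsmul (G p) (vunit (h p)))"
    using assms by (intro vmap_superset) auto
  ultimately show ?thesis
    by (auto simp: vsum_def vadd_def vsmul_def ring_distribs sum.distrib)
qed

lemma vmap_vsmul:
  assumes "finite (supp F)"
  shows "vmap h (vsmul c F) = vsmul c (vmap h F)"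
proof -
  have "vmap h (vsmul c F) = vsum (supp F) (\<lambda>p. vsmul (vsmul c F p) (vunit (h p)))"
    using assms supp_vsmul by (intro vmap_superset) auto
  then show ?thesis
    by (auto simp: vmap_def vsum_def vsmul_def sum_distrib_left mult.assoc)
qed

lemma vmap_vunit [simp]: "vmap h (vunit p :: _ \<Rightarrow> 'k::field) = vunit (h p)"
  by (auto simp: vmap_def vsum_def vsmul_def vunit_apply)

lemma vmap_vsym [simp]: "vmap h (vsym x y :: _ \<Rightarrow> 'k::field) = vunit (h (x, y))"
  using vmap_vunit[of h "(x, y)"] by (simp add: vunit_def)

lemma vmap_vsum:
  assumes "finite A" "\<And>i. i \<in> A \<Longrightarrow> finite (supp (g i))"
  shows "vmap h (vsum A g) = vsum A (\<lambda>i. vmap h (g i))"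
  using assms
proof (induction A rule: finite_induct)
  case empty
  then show ?case by (simp add: vmap_def)
next
  case (insert a A)
  then show ?case by (simp add: vsum_insert vmap_vadd finite_supp_vsum)
qed

lemma supp_vmap: "supp (vmap h F) \<subseteq> h ` supp F"
proof
  fix q assume "q \<in> supp (vmap h F)"
  then obtain p where "p \<in> supp F" "vsmul (F p) (vunit (h p)) q \<noteq> 0"
    by (auto simp: supp_def vmap_def vsum_def elim!: sum.not_neutral_contains_not_neutral)
  then show "q \<in> h ` supp F" by (auto simp: vsmul_def vunit_apply split: if_splits)
qed

lemma finite_supp_vmap [simp]: "finite (supp F) \<Longrightarrow> finite (supp (vmap h F))"
  by (meson finite_imageI finite_subset supp_vmap)

lemma vmap_vmap:
  assumes "finite (supp F)"
  shows "vmap g (vmap h F) = vmap (g \<circ> h) F"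
  using assms
  by (simp add: vmap_def[of h] vmap_vsum vmap_vsmul) (simp add: vmap_def)

lemma vmap_id_on:
  assumes "finite (supp F)" "\<And>p. p \<in> supp F \<Longrightarrow> h p = p"
  shows "vmap h F = F"
  using assms vsum_expand[OF assms(1) subset_refl] by (simp add: vmap_def cong: vsum_cong)

lemma vmap_vbr:
  assumes fin: "finite (supp f)" "finite (supp g)"
    and br: "\<And>p t. p \<in> supp f \<Longrightarrow> t \<in> supp g \<Longrightarrow> h (br_pair L p t) = br_pair M (h p) (h t)"
    and sign: "\<And>p. p \<in> supp f \<Longrightarrow> lsign M (fst (h p)) (snd (h p)) = lsign L (fst p) (snd p)"
  shows "vmap h (vbr L f g) = vbr M (vmap h f) (vmap h g)"
proof -
  let ?S = "supp f" and ?T = "supp g"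
  have "vbr L f g = vsum ?S (\<lambda>p. vsum ?T (\<lambda>t. vsmul (f p * g t) (vbr L (vunit p) (vunit t))))"
    using vbr_vsum_vsum[OF fin, of L f "\<lambda>p. p" g "\<lambda>t. t"] vsum_expand[OF fin(1) subset_refl]
      vsum_expand[OF fin(2) subset_refl] by simp
  then have "vmap h (vbr L f g)
      = vsum ?S (\<lambda>p. vsum ?T (\<lambda>t. vsmul (f p * g t) (vmap h (vbr L (vunit p) (vunit t)))))"
    using fin by (simp add: vmap_vsum finite_supp_vsum vmap_vsmul)
  also have "\<dots> = vsum ?S (\<lambda>p. vsum ?T (\<lambda>t. vsmul (f p * g t) (vbr M (vunit (h p)) (vunit (h t)))))"
    using br sign by (intro vsum_cong) (simp add: vbr_vunit vmap_vsmul)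
  also have "\<dots> = vbr M (vmap h f) (vmap h g)"
    unfolding vmap_def using vbr_vsum_vsum[OF fin, of M f h g h] by simp
  finally show ?thesis .
qed

lemma VL_iff: "f \<in> VL L \<longleftrightarrow> finite (supp f) \<and> supp f \<subseteq> lhom L \<times> lhom L"
  by (simp add: VL_def supp_def)

lemma VL_vsym: "x \<in> lhom L \<Longrightarrow> y \<in> lhom L \<Longrightarrow> vsym x y \<in> VL L"
  by (simp add: VL_iff)

lemma VL_vadd: "f \<in> VL L \<Longrightarrow> g \<in> VL L \<Longrightarrow> vadd f g \<in> VL L"
  using supp_vadd[of f g] by (auto simp: VL_iff)

lemma VL_vsmul: "f \<in> VL L \<Longrightarrow> vsmul c f \<in> VL L"
  using supp_vsmul[of c f] by (auto simp: VL_iff)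

lemma VL_vbr:
  assumes "\<And>x y. x \<in> lhom L \<Longrightarrow> y \<in> lhom L \<Longrightarrow> lbr L x y \<in> lhom L"
    and "f \<in> VL L" "g \<in> VL L"
  shows "vbr L f g \<in> VL L"
  using assms supp_vbr[of f g L] by (fastforce simp: VL_iff br_pair_def)

lemma VL_vmap:
  assumes "f \<in> VL L" "\<And>p. p \<in> lhom L \<times> lhom L \<Longrightarrow> h p \<in> lhom M \<times> lhom M"
  shows "vmap h f \<in> VL M"
proof -
  have "h ` supp f \<subseteq> lhom M \<times> lhom M"
    using assms unfolding VL_iff by blast
  then show ?thesis
    using assms(1) supp_vmap[of h f] unfolding VL_iff by (meson finite_supp_vmap order_trans)
qed

section \<open>The relation ideal of the exterior square\<close>

lemma wedge_ideal_generator: "g \<in> tens_rels L \<union> lsa_rels L \<union> box_rels L \<Longrightarrow> g \<in> wedge_ideal L"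
  unfolding wedge_ideal_def by (rule gen_ideal.gen)

lemma wedge_ideal_vadd: "f \<in> wedge_ideal L \<Longrightarrow> g \<in> wedge_ideal L \<Longrightarrow> vadd f g \<in> wedge_ideal L"
  unfolding wedge_ideal_def by (rule gen_ideal.add)

lemma wedge_ideal_vsmul: "f \<in> wedge_ideal L \<Longrightarrow> vsmul c f \<in> wedge_ideal L"
  unfolding wedge_ideal_def by (rule gen_ideal.smul)

lemma wedge_ideal_vbr_left: "f \<in> wedge_ideal L \<Longrightarrow> w \<in> VL L \<Longrightarrow> vbr L w f \<in> wedge_ideal L"
  unfolding wedge_ideal_def by (rule gen_ideal.brl)

lemma wedge_ideal_vbr_right: "f \<in> wedge_ideal L \<Longrightarrow> w \<in> VL L \<Longrightarrow> vbr L f w \<in> wedge_ideal L"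
  unfolding wedge_ideal_def by (rule gen_ideal.brr)

lemma wedge_ideal_vsub: "f \<in> wedge_ideal L \<Longrightarrow> g \<in> wedge_ideal L \<Longrightarrow> vsub f g \<in> wedge_ideal L"
  by (simp add: vsub_eq_vadd wedge_ideal_vadd wedge_ideal_vsmul)

lemma wedge_ideal_vsub_cancel:
  assumes "vsub f g \<in> wedge_ideal L" "g \<in> wedge_ideal L"
  shows "f \<in> wedge_ideal L"
proof -
  have "f = vadd (vsub f g) g" by (simp add: vsub_def vadd_def)
  then show ?thesis using assms wedge_ideal_vadd by metis
qed

lemma wedge_ideal_vsum:
  assumes "(\<lambda>p. 0) \<in> wedge_ideal L" "finite A" "\<And>i. i \<in> A \<Longrightarrow> g i \<in> wedge_ideal L"
  shows "vsum A g \<in> wedge_ideal L"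
  using assms(2,3)
proof (induction A rule: finite_induct)
  case empty
  then show ?case using assms(1) by simp
next
  case (insert a A)
  then show ?case by (simp add: vsum_insert wedge_ideal_vadd)
qed

lemma wedge_rel_add_left:
  "(x \<in> lev L \<and> x' \<in> lev L) \<or> (x \<in> lod L \<and> x' \<in> lod L) \<Longrightarrow> y \<in> lhom L \<Longrightarrow>
   vadd (vsym (ladd L x x') y) (vsmul (-1) (vadd (vsym x y) (vsym x' y))) \<in> wedge_ideal L"
  by (rule wedge_ideal_generator) (unfold tens_rels_def, blast)

lemma wedge_rel_add_right:
  "(x \<in> lev L \<and> x' \<in> lev L) \<or> (x \<in> lod L \<and> x' \<in> lod L) \<Longrightarrow> y \<in> lhom L \<Longrightarrow>
   vadd (vsym y (ladd L x x')) (vsmul (-1) (vadd (vsym y x) (vsym y x'))) \<in> wedge_ideal L"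
  by (rule wedge_ideal_generator) (unfold tens_rels_def, blast)

lemma wedge_rel_smul_left:
  "x \<in> lhom L \<Longrightarrow> y \<in> lhom L \<Longrightarrow>
   vadd (vsym (lsmul L c x) y) (vsmul (- c) (vsym x y)) \<in> wedge_ideal L"
  by (rule wedge_ideal_generator) (unfold tens_rels_def, blast)

lemma wedge_rel_smul_right:
  "x \<in> lhom L \<Longrightarrow> y \<in> lhom L \<Longrightarrow>
   vadd (vsym x (lsmul L c y)) (vsmul (- c) (vsym x y)) \<in> wedge_ideal L"
  by (rule wedge_ideal_generator) (unfold tens_rels_def, blast)

lemma wedge_rel_br_left:
  "x \<in> lhom L \<Longrightarrow> x' \<in> lhom L \<Longrightarrow> y \<in> lhom L \<Longrightarrow>
   vadd (vsym (lbr L x x') y)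
     (vadd (vsmul (-1) (vsym x (lbr L x' y))) (vsmul (lsign L x x') (vsym x' (lbr L x y))))
   \<in> wedge_ideal L"
  by (rule wedge_ideal_generator) (unfold tens_rels_def, blast)

lemma wedge_rel_br_right:
  "x \<in> lhom L \<Longrightarrow> y \<in> lhom L \<Longrightarrow> y' \<in> lhom L \<Longrightarrow>
   vadd (vsym x (lbr L y y'))
     (vadd (vsmul (- ((-1) ^ (ldeg L y' * (ldeg L x + ldeg L y)))) (vsym (lbr L y' x) y))
           (vsmul (lsign L x y) (vsym (lbr L y x) y')))
   \<in> wedge_ideal L"
  by (rule wedge_ideal_generator) (unfold tens_rels_def, blast)

lemma wedge_rel_swap:
  "x \<in> lhom L \<Longrightarrow> y \<in> lhom L \<Longrightarrow> vadd (vsym x y) (vsmul (lsign L x y) (vsym y x)) \<in> wedge_ideal L"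
  by (rule wedge_ideal_generator) (unfold box_rels_def, blast)

lemma wedge_rel_even_square: "x \<in> lev L \<Longrightarrow> vsym x x \<in> wedge_ideal L"
  by (rule wedge_ideal_generator) (unfold box_rels_def, blast)

lemma wedge_rel_super_skew:
  "p \<in> lhom L \<times> lhom L \<Longrightarrow> q \<in> lhom L \<times> lhom L \<Longrightarrow>
   vadd (vbr L (vunit p) (vunit q)) (vsmul ((-1) ^ (pdeg L p * pdeg L q)) (vbr L (vunit q) (vunit p)))
   \<in> wedge_ideal L"
  by (rule wedge_ideal_generator) (unfold lsa_rels_def vunit_def, blast)

lemma wedge_rel_super_jacobi:
  "p \<in> lhom L \<times> lhom L \<Longrightarrow> q \<in> lhom L \<times> lhom L \<Longrightarrow> r \<in> lhom L \<times> lhom L \<Longrightarrow>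
   vadd (vadd (vsmul ((-1) ^ (pdeg L p * pdeg L r)) (vbr L (vunit p) (vbr L (vunit q) (vunit r))))
              (vsmul ((-1) ^ (pdeg L q * pdeg L p)) (vbr L (vunit q) (vbr L (vunit r) (vunit p)))))
        (vsmul ((-1) ^ (pdeg L r * pdeg L q)) (vbr L (vunit r) (vbr L (vunit p) (vunit q))))
   \<in> wedge_ideal L"
  by (rule wedge_ideal_generator) (unfold lsa_rels_def vunit_def Let_def, blast)

section \<open>Lie superalgebras\<close>

locale lie_superalgebra =
  fixes L :: "('k::field, 'a) lsa"
  assumes is_lsa: "is_lsa L"
begin

abbreviation "C \<equiv> lcarr L"
abbreviation "Ev \<equiv> lev L"
abbreviation "Od \<equiv> lod L"
abbreviation "z \<equiv> lzero L"
abbreviation lsa_add (infixl "\<oplus>" 65) where "x \<oplus> y \<equiv> ladd L x y"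
abbreviation "ng \<equiv> lneg L"
abbreviation "sm \<equiv> lsmul L"
abbreviation "br \<equiv> lbr L"
abbreviation "sb \<equiv> lsub L"

lemma zero_closed [simp]: "z \<in> C"
  using is_lsa unfolding is_lsa_def by (elim conjE) metis
lemma add_closed [simp]: "x \<in> C \<Longrightarrow> y \<in> C \<Longrightarrow> x \<oplus> y \<in> C"
  using is_lsa unfolding is_lsa_def by (elim conjE) metis
lemma neg_closed [simp]: "x \<in> C \<Longrightarrow> ng x \<in> C"
  using is_lsa unfolding is_lsa_def by (elim conjE) metis
lemma smul_closed [simp]: "x \<in> C \<Longrightarrow> sm c x \<in> C"
  using is_lsa unfolding is_lsa_def by (elim conjE) metis
lemma br_closed [simp]: "x \<in> C \<Longrightarrow> y \<in> C \<Longrightarrow> br x y \<in> C"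
  using is_lsa unfolding is_lsa_def by (elim conjE) metis
lemma add_assoc: "x \<in> C \<Longrightarrow> y \<in> C \<Longrightarrow> w \<in> C \<Longrightarrow> x \<oplus> y \<oplus> w = x \<oplus> (y \<oplus> w)"
  using is_lsa unfolding is_lsa_def by (elim conjE) metis
lemma add_commute: "x \<in> C \<Longrightarrow> y \<in> C \<Longrightarrow> x \<oplus> y = y \<oplus> x"
  using is_lsa unfolding is_lsa_def by (elim conjE) metis
lemma add_zero [simp]: "x \<in> C \<Longrightarrow> x \<oplus> z = x"
  using is_lsa unfolding is_lsa_def by (elim conjE) metis
lemma add_neg [simp]: "x \<in> C \<Longrightarrow> x \<oplus> ng x = z"
  using is_lsa unfolding is_lsa_def by (elim conjE) metis
lemma smul_add: "x \<in> C \<Longrightarrow> y \<in> C \<Longrightarrow> sm a (x \<oplus> y) = sm a x \<oplus> sm a y"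
  using is_lsa unfolding is_lsa_def by (elim conjE) metis
lemma add_smul: "x \<in> C \<Longrightarrow> sm (a + b) x = sm a x \<oplus> sm b x"
  using is_lsa unfolding is_lsa_def by (elim conjE) metis
lemma smul_smul: "x \<in> C \<Longrightarrow> sm (a * b) x = sm a (sm b x)"
  using is_lsa unfolding is_lsa_def by (elim conjE) metis
lemma smul_one [simp]: "x \<in> C \<Longrightarrow> sm 1 x = x"
  using is_lsa unfolding is_lsa_def by (elim conjE) metis
lemma even_subspace: "subspace_of L Ev"
  using is_lsa unfolding is_lsa_def by (elim conjE) metis
lemma odd_subspace: "subspace_of L Od"
  using is_lsa unfolding is_lsa_def by (elim conjE) metis
lemma even_odd_inter: "Ev \<inter> Od = {z}"
  using is_lsa unfolding is_lsa_def by (elim conjE) metis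
lemma even_odd_decomp: "x \<in> C \<Longrightarrow> \<exists>a\<in>Ev. \<exists>b\<in>Od. x = a \<oplus> b"
  using is_lsa unfolding is_lsa_def by (elim conjE) metis
lemma br_add_left: "x \<in> C \<Longrightarrow> y \<in> C \<Longrightarrow> w \<in> C \<Longrightarrow> br (x \<oplus> y) w = br x w \<oplus> br y w"
  using is_lsa unfolding is_lsa_def by (elim conjE) metis
lemma br_add_right: "x \<in> C \<Longrightarrow> y \<in> C \<Longrightarrow> w \<in> C \<Longrightarrow> br w (x \<oplus> y) = br w x \<oplus> br w y"
  using is_lsa unfolding is_lsa_def by (elim conjE) metis
lemma br_even_even: "x \<in> Ev \<Longrightarrow> y \<in> Ev \<Longrightarrow> br x y \<in> Ev"
  using is_lsa unfolding is_lsa_def by (elim conjE) metis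
lemma br_even_odd: "x \<in> Ev \<Longrightarrow> y \<in> Od \<Longrightarrow> br x y \<in> Od \<and> br y x \<in> Od"
  using is_lsa unfolding is_lsa_def by (elim conjE) metis
lemma br_odd_odd: "x \<in> Od \<Longrightarrow> y \<in> Od \<Longrightarrow> br x y \<in> Ev"
  using is_lsa unfolding is_lsa_def by (elim conjE) metis
lemma br_skew: "x \<in> lhom L \<Longrightarrow> y \<in> lhom L \<Longrightarrow> br x y = ng (sm (lsign L x y) (br y x))"
  using is_lsa unfolding is_lsa_def by (elim conjE) metis

lemma neg_add_self [simp]: "x \<in> C \<Longrightarrow> ng x \<oplus> x = z"
  by (simp add: add_commute[of "ng x" x])
lemma zero_add [simp]: "x \<in> C \<Longrightarrow> z \<oplus> x = x"
  by (simp add: add_commute[of z x])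
lemma add_neg_cancel_left [simp]: "x \<in> C \<Longrightarrow> y \<in> C \<Longrightarrow> x \<oplus> (ng x \<oplus> y) = y"
  by (simp add: add_assoc[symmetric])
lemma neg_add_cancel_left [simp]: "x \<in> C \<Longrightarrow> y \<in> C \<Longrightarrow> ng x \<oplus> (x \<oplus> y) = y"
  by (simp add: add_assoc[symmetric])

lemma add_left_commute: "x \<in> C \<Longrightarrow> y \<in> C \<Longrightarrow> w \<in> C \<Longrightarrow> x \<oplus> (y \<oplus> w) = y \<oplus> (x \<oplus> w)"
  by (simp add: add_assoc[symmetric] add_commute[of x y])

lemma neg_unique:
  assumes "x \<in> C" "y \<in> C" "x \<oplus> y = z"
  shows "y = ng x"
proof -
  have "y = ng x \<oplus> (x \<oplus> y)" using assms(1,2) by simp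
  also have "\<dots> = ng x" using assms by simp
  finally show ?thesis .
qed

lemma smul_zero_left [simp]:
  assumes "x \<in> C" shows "sm 0 x = z"
proof -
  have "sm 0 x = ng (sm 0 x) \<oplus> (sm 0 x \<oplus> sm 0 x)" using assms by simp
  also have "\<dots> = z" using assms add_smul[OF assms, of 0 0] by simp
  finally show ?thesis .
qed

lemma neg_eq_smul: "x \<in> C \<Longrightarrow> ng x = sm (-1) x"
  using add_smul[of x 1 "-1"] neg_unique[of x "sm (-1) x"] by simp

lemma smul_zero [simp]: "sm c z = z"
  using smul_smul[of z c 0] by simp

lemma neg_zero [simp]: "ng z = z"
  by (simp add: neg_eq_smul)
lemma neg_add: "x \<in> C \<Longrightarrow> y \<in> C \<Longrightarrow> ng (x \<oplus> y) = ng x \<oplus> ng y"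
  by (simp add: neg_eq_smul smul_add)
lemma neg_neg [simp]: "x \<in> C \<Longrightarrow> ng (ng x) = x"
  by (simp add: neg_eq_smul smul_smul[symmetric])
lemma smul_neg: "x \<in> C \<Longrightarrow> sm c (ng x) = ng (sm c x)"
  by (simp add: neg_eq_smul smul_smul[symmetric] mult.commute)
lemma sub_eq: "sb x y = x \<oplus> ng y"
  by (simp add: lsub_def)
lemma sub_closed [simp]: "x \<in> C \<Longrightarrow> y \<in> C \<Longrightarrow> sb x y \<in> C"
  by (simp add: sub_eq)

lemma sub_eq_zero_imp_eq: "x \<in> C \<Longrightarrow> y \<in> C \<Longrightarrow> sb x y = z \<Longrightarrow> x = y"
  using neg_unique[of x "ng y"] by (simp add: sub_eq) (metis neg_neg neg_closed)
lemma sub_sub_cancel_left: "x \<in> C \<Longrightarrow> a \<in> C \<Longrightarrow> b \<in> C \<Longrightarrow> sb (sb x b) (sb x a) = sb a b"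
  by (simp add: sub_eq neg_add add_commute[of x "ng b"] add_assoc add_commute[of a "ng b"])
lemma sub_sub_self: "a \<in> C \<Longrightarrow> b \<in> C \<Longrightarrow> sb (sb a b) a = ng b"
  by (simp add: sub_eq add_commute[of a "ng b"] add_assoc)
lemma sub_sub_cancel: "a \<in> C \<Longrightarrow> b \<in> C \<Longrightarrow> sb a (sb a b) = b"
  by (simp add: sub_eq neg_add)
lemma sub_add_cancel: "a \<in> C \<Longrightarrow> b \<in> C \<Longrightarrow> sb a b \<oplus> b = a"
  by (simp add: sub_eq add_assoc)
lemma add_sub_cancel_left: "a \<in> C \<Longrightarrow> b \<in> C \<Longrightarrow> sb (a \<oplus> b) a = b"
  by (simp add: sub_eq add_commute[of "a \<oplus> b" "ng a"])
lemma add_sub_cancel: "a \<in> C \<Longrightarrow> b \<in> C \<Longrightarrow> b \<oplus> sb a b = a"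
  by (simp add: sub_eq add_commute[of a "ng b"])
lemma neg_sub: "a \<in> C \<Longrightarrow> b \<in> C \<Longrightarrow> ng (sb a b) = sb b a"
  by (simp add: sub_eq neg_add add_commute)

lemma subspace_carrier: "subspace_of L S \<Longrightarrow> S \<subseteq> C"
  by (simp add: subspace_of_def)
lemma subspace_zero: "subspace_of L S \<Longrightarrow> z \<in> S"
  by (simp add: subspace_of_def)
lemma subspace_add: "subspace_of L S \<Longrightarrow> x \<in> S \<Longrightarrow> y \<in> S \<Longrightarrow> x \<oplus> y \<in> S"
  by (simp add: subspace_of_def)
lemma subspace_smul: "subspace_of L S \<Longrightarrow> x \<in> S \<Longrightarrow> sm c x \<in> S"
  by (simp add: subspace_of_def)
lemma subspace_neg: "subspace_of L S \<Longrightarrow> x \<in> S \<Longrightarrow> ng x \<in> S"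
  using neg_eq_smul[of x] subspace_smul[of S x "-1"] subspace_carrier[of S] by auto
lemma subspace_sub: "subspace_of L S \<Longrightarrow> x \<in> S \<Longrightarrow> y \<in> S \<Longrightarrow> sb x y \<in> S"
  by (simp add: sub_eq subspace_add subspace_neg)

lemma even_closed [simp]: "x \<in> Ev \<Longrightarrow> x \<in> C"
  using even_subspace subspace_carrier by blast
lemma odd_closed [simp]: "x \<in> Od \<Longrightarrow> x \<in> C"
  using odd_subspace subspace_carrier by blast
lemma hom_iff: "x \<in> lhom L \<longleftrightarrow> x \<in> Ev \<or> x \<in> Od"
  by (simp add: lhom_def)
lemma hom_closed [simp]: "x \<in> lhom L \<Longrightarrow> x \<in> C"
  by (auto simp: hom_iff)
lemma zero_even: "z \<in> Ev"
  using subspace_zero[OF even_subspace] .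
lemma zero_odd: "z \<in> Od"
  using subspace_zero[OF odd_subspace] .
lemma zero_hom: "z \<in> lhom L"
  using zero_even by (simp add: hom_iff)

lemma br_hom: "x \<in> lhom L \<Longrightarrow> y \<in> lhom L \<Longrightarrow> br x y \<in> lhom L"
  using br_even_even br_even_odd br_odd_odd by (auto simp: hom_iff)
lemma smul_hom: "x \<in> lhom L \<Longrightarrow> sm c x \<in> lhom L"
  using subspace_smul[OF even_subspace] subspace_smul[OF odd_subspace] by (auto simp: hom_iff)
lemma add_hom: "(x \<in> Ev \<and> y \<in> Ev) \<or> (x \<in> Od \<and> y \<in> Od) \<Longrightarrow> x \<oplus> y \<in> lhom L"
  using subspace_add[OF even_subspace] subspace_add[OF odd_subspace] by (auto simp: hom_iff)

lemma comp0_unique: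
  assumes x: "x \<in> C" and a: "a \<in> Ev" "sb x a \<in> Od"
  shows "comp0 L x = a"
  unfolding comp0_def
proof (rule the_equality)
  show "a \<in> Ev \<and> sb x a \<in> Od" using a by simp
next
  fix b assume b: "b \<in> Ev \<and> sb x b \<in> Od"
  have "sb (sb x b) (sb x a) = sb a b"
    using x a b by (simp add: sub_sub_cancel_left)
  then have "sb a b \<in> Od" using b a subspace_sub[OF odd_subspace] by metis
  moreover have "sb a b \<in> Ev" using b a subspace_sub[OF even_subspace] by metis
  ultimately have "sb a b = z" using even_odd_inter by blast
  then show "b = a" using a b sub_eq_zero_imp_eq[of a b] by simp
qed

lemma comp0_even: "x \<in> Ev \<Longrightarrow> comp0 L x = x"
  by (rule comp0_unique) (auto simp: sub_eq zero_odd)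
lemma comp1_even: "x \<in> Ev \<Longrightarrow> comp1 L x = z"
  by (simp add: comp1_def comp0_even sub_eq)
lemma comp0_odd: "x \<in> Od \<Longrightarrow> comp0 L x = z"
  by (rule comp0_unique) (auto simp: sub_eq zero_even)
lemma comp1_odd: "x \<in> Od \<Longrightarrow> comp1 L x = x"
  by (simp add: comp1_def comp0_odd sub_eq)

lemma comp_decomp:
  assumes x: "x \<in> C"
  shows "comp0 L x \<in> Ev" "comp1 L x \<in> Od" "x = comp0 L x \<oplus> comp1 L x"
proof -
  obtain a b where ab: "a \<in> Ev" "b \<in> Od" "x = a \<oplus> b"
    using even_odd_decomp[OF x] by blast
  have "sb x a = b" using ab by (simp add: add_sub_cancel_left)
  then have "comp0 L x = a" "comp1 L x = b"
    using comp0_unique[OF x ab(1)] ab by (simp_all add: comp1_def)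
  then show "comp0 L x \<in> Ev" "comp1 L x \<in> Od" "x = comp0 L x \<oplus> comp1 L x"
    using ab by simp_all
qed

lemma wedge_ideal_zero: "(\<lambda>p. 0) \<in> wedge_ideal L"
  using wedge_ideal_vsmul[OF wedge_rel_even_square[OF zero_even], of 0] by (simp add: vsmul_def)

lemma vsym_zero_left: "y \<in> lhom L \<Longrightarrow> vsym z y \<in> wedge_ideal L"
  using wedge_rel_smul_left[OF zero_hom, of y 0] by (simp add: vadd_def vsmul_def)

lemma vsym_zero_right: "y \<in> lhom L \<Longrightarrow> vsym y z \<in> wedge_ideal L"
  using wedge_rel_smul_right[OF _ zero_hom, of y 0] by (simp add: vadd_def vsmul_def)

lemma VL_vbr_closed: "f \<in> VL L \<Longrightarrow> g \<in> VL L \<Longrightarrow> vbr L f g \<in> VL L"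
  by (rule VL_vbr[OF br_hom])

lemma even_hom: "x \<in> Ev \<Longrightarrow> x \<in> lhom L"
  by (simp add: hom_iff)
lemma odd_hom: "x \<in> Od \<Longrightarrow> x \<in> lhom L"
  by (simp add: hom_iff)

lemma tens_rels_VL: "g \<in> tens_rels L \<Longrightarrow> g \<in> VL L"
  unfolding tens_rels_def
  by (elim UnE CollectE exE conjE; hypsubst)
     (auto intro!: VL_vadd VL_vsmul VL_vsym intro: br_hom smul_hom add_hom even_hom odd_hom)

lemma lsa_rels_VL: "g \<in> lsa_rels L \<Longrightarrow> g \<in> VL L"
  unfolding lsa_rels_def Let_def
  by (elim UnE CollectE exE conjE; hypsubst)
     (auto intro!: VL_vadd VL_vsmul VL_vsym VL_vbr_closed)

lemma box_rels_VL: "g \<in> box_rels L \<Longrightarrow> g \<in> VL L"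
  unfolding box_rels_def
  by (elim UnE CollectE exE conjE; hypsubst)
     (auto intro!: VL_vadd VL_vsmul VL_vsym even_hom)

lemma wedge_ideal_subset_VL: "wedge_ideal L \<subseteq> VL L"
proof
  fix f assume "f \<in> wedge_ideal L"
  then show "f \<in> VL L"
    unfolding wedge_ideal_def
    by (induction rule: gen_ideal.induct)
       (blast intro: tens_rels_VL lsa_rels_VL box_rels_VL VL_vadd VL_vsmul VL_vbr_closed)+
qed

lemma supp_vbr_carrier:
  assumes "finite (supp f)" "finite (supp g)" "supp f \<subseteq> C \<times> C" "supp g \<subseteq> C \<times> C"
  shows "supp (vbr L f g) \<subseteq> C \<times> C"
  using supp_vbr[OF assms(1,2), of L] assms(3,4) by (fastforce simp: br_pair_def)

lemma wedge_elt_hom_congruent: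
  assumes x: "x \<in> lhom L" and y: "y \<in> lhom L"
  shows "vsub (wedge_elt L x y) (vsym x y) \<in> wedge_ideal L"
proof -
  have "vsub (wedge_elt L x y) (vsym x y) = vadd (vadd (vsym x z) (vsym z y)) (vsym z z)"
  proof -
    consider "x \<in> Ev" "y \<in> Ev" | "x \<in> Ev" "y \<in> Od" | "x \<in> Od" "y \<in> Ev" | "x \<in> Od" "y \<in> Od"
      using x y by (auto simp: hom_iff)
    then show ?thesis
      by cases (simp_all add: wedge_elt_def comp0_even comp1_even comp0_odd comp1_odd
          vsub_def vadd_def fun_eq_iff algebra_simps)
  qed
  moreover have "vsym x z \<in> wedge_ideal L" "vsym z y \<in> wedge_ideal L" "vsym z z \<in> wedge_ideal L"
    using vsym_zero_left vsym_zero_right zero_hom x y by auto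
  ultimately show ?thesis by (simp add: wedge_ideal_vadd)
qed

end

section \<open>The quotient by a graded ideal\<close>

definition cls_pair :: "('k, 'a, 'b) lsa_scheme \<Rightarrow> 'a set \<Rightarrow> 'a \<times> 'a \<Rightarrow> 'a set \<times> 'a set" where
  "cls_pair L N p = (coset L N (fst p), coset L N (snd p))"

lemma nat_push_eq_vmap:
  assumes "finite (supp f)"
  shows "nat_push L N f = vmap (cls_pair L N) f"
proof
  fix Q
  have "nat_push L N f Q = (\<Sum>p\<in>supp f. if cls_pair L N p = Q then f p else 0)"
    using sum.inter_filter[OF assms] by (simp add: nat_push_def supp_def cls_pair_def)
  then show "nat_push L N f Q = vmap (cls_pair L N) f Q"
    by (auto simp: vmap_def vsum_def vsmul_def vunit_apply intro!: sum.cong)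
qed

locale lsa_graded_ideal = lie_superalgebra L for L :: "('k::field, 'a) lsa" +
  fixes N :: "'a set"
  assumes graded_ideal: "graded_ideal L N"
begin

abbreviation "cs \<equiv> coset L N"
abbreviation "Q \<equiv> quot L N"
abbreviation "cls \<equiv> cls_pair L N"

lemma N_subspace: "subspace_of L N"
  using graded_ideal by (simp add: graded_ideal_def)
lemma N_comp0: "x \<in> N \<Longrightarrow> comp0 L x \<in> N"
  using graded_ideal by (simp add: graded_ideal_def)
lemma br_N_right: "x \<in> C \<Longrightarrow> n \<in> N \<Longrightarrow> br x n \<in> N"
  using graded_ideal by (simp add: graded_ideal_def)

lemma N_closed [simp]: "x \<in> N \<Longrightarrow> x \<in> C"
  using N_subspace subspace_carrier by blast
lemmas N_zero = subspace_zero[OF N_subspace]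
  and N_add = subspace_add[OF N_subspace]
  and N_smul = subspace_smul[OF N_subspace]
  and N_neg = subspace_neg[OF N_subspace]
  and N_sub = subspace_sub[OF N_subspace]

lemma N_comp1: "x \<in> N \<Longrightarrow> comp1 L x \<in> N"
  by (simp add: comp1_def N_sub N_comp0)

lemma br_N_left_hom:
  assumes "n \<in> N" "n \<in> lhom L" "y \<in> lhom L"
  shows "br n y \<in> N"
  using br_skew[OF assms(2,3)] assms by (simp add: N_neg N_smul br_N_right)

text \<open>\<open>graded_ideal\<close> only closes \<open>N\<close> under brackets from the left; the other side needs
  super skew-symmetry, which holds for homogeneous elements only.\<close>
lemma br_N_left:
  assumes n: "n \<in> N" and y: "y \<in> C"
  shows "br n y \<in> N"
proof -
  have hom: "br m y \<in> N" if "m \<in> N" "m \<in> lhom L" for m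
  proof -
    have "br m y = br m (comp0 L y) \<oplus> br m (comp1 L y)"
      using comp_decomp[OF y] that by (metis br_add_right even_closed odd_closed hom_closed)
    moreover have "br m (comp0 L y) \<in> N" "br m (comp1 L y) \<in> N"
      using comp_decomp[OF y] that br_N_left_hom by (auto simp: hom_iff)
    ultimately show ?thesis by (simp add: N_add)
  qed
  have "br n y = br (comp0 L n) y \<oplus> br (comp1 L n) y"
    using comp_decomp[of n] n y by (metis br_add_left even_closed odd_closed N_closed)
  moreover have "br (comp0 L n) y \<in> N" "br (comp1 L n) y \<in> N"
    using hom comp_decomp[of n] n N_comp0 N_comp1 by (auto simp: hom_iff)
  ultimately show ?thesis by (simp add: N_add)
qed

text \<open>If two homogeneous elements of different parity are congruent modulo the graded ideal
  \<open>N\<close>, the even part of their difference forces both into \<open>N\<close>.\<close>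
lemma hom_congruent_cases:
  assumes a: "a \<in> lhom L" "a' \<in> lhom L" and n: "sb a a' \<in> N"
  shows "(a \<in> Ev \<and> a' \<in> Ev \<and> sb a a' \<in> Ev) \<or> (a \<in> Od \<and> a' \<in> Od \<and> sb a a' \<in> Od)
    \<or> (a \<in> N \<and> a' \<in> N)"
proof -
  consider "a \<in> Ev" "a' \<in> Ev" | "a \<in> Od" "a' \<in> Od" | "a \<in> Ev" "a' \<in> Od" | "a \<in> Od" "a' \<in> Ev"
    using a by (auto simp: hom_iff)
  then show ?thesis
  proof cases
    case 1
    then show ?thesis using subspace_sub[OF even_subspace] by blast
  next
    case 2
    then show ?thesis using subspace_sub[OF odd_subspace] by blast
  next
    case 3
    have "sb (sb a a') a = ng a'" using 3 by (simp add: sub_sub_self)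
    then have "comp0 L (sb a a') = a"
      using 3 comp0_unique[of "sb a a'" a] subspace_neg[OF odd_subspace] by simp
    then have "a \<in> N" using N_comp0[OF n] by simp
    moreover have "a' \<in> N" using N_sub[OF \<open>a \<in> N\<close> n] 3 by (simp add: sub_sub_cancel)
    ultimately show ?thesis by simp
  next
    case 4
    have "sb (sb a a') (ng a') = a" using 4 by (simp add: sub_eq add_assoc)
    then have "comp0 L (sb a a') = ng a'"
      using 4 comp0_unique[of "sb a a'" "ng a'"] subspace_neg[OF even_subspace] by simp
    then have "a' \<in> N" using N_comp0[OF n] N_neg[of "ng a'"] 4 by simp
    moreover have "a \<in> N"
      using N_add[OF n \<open>a' \<in> N\<close>] 4 by (simp add: sub_add_cancel)
    ultimately show ?thesis by simp
  qed
qed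

lemma coset_subset:
  assumes "a \<in> C" "b \<in> C" "sb a b \<in> N"
  shows "cs a \<subseteq> cs b"
proof
  fix x assume "x \<in> cs a"
  then obtain n where n: "n \<in> N" "x = a \<oplus> n" by (auto simp: coset_def)
  have "x = b \<oplus> (sb a b \<oplus> n)"
    using n assms add_sub_cancel[of a b] by (metis add_assoc N_closed sub_closed)
  then show "x \<in> cs b" using N_add[OF assms(3) n(1)] by (auto simp: coset_def)
qed

lemma coset_eq_iff:
  assumes "a \<in> C" "b \<in> C"
  shows "cs a = cs b \<longleftrightarrow> sb a b \<in> N"
proof
  assume e: "cs a = cs b"
  have "a \<in> cs a" using assms N_zero by (force simp: coset_def)
  then obtain n where "n \<in> N" "a = b \<oplus> n" using e by (auto simp: coset_def)
  then show "sb a b \<in> N" using assms by (simp add: add_sub_cancel_left)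
next
  assume h: "sb a b \<in> N"
  then have "sb b a \<in> N" using N_neg[OF h] assms by (simp add: neg_sub)
  then show "cs a = cs b" using coset_subset h assms by blast
qed

lemma coset_eq_zero_iff: "a \<in> C \<Longrightarrow> cs a = cs z \<longleftrightarrow> a \<in> N"
  by (simp add: coset_eq_iff sub_eq)

lemma quot_even: "lev Q = cs ` Ev"
  by (simp add: quot_def)
lemma quot_odd: "lod Q = cs ` Od"
  by (simp add: quot_def)
lemma quot_hom: "lhom Q = cs ` lhom L"
  by (auto simp: quot_def lhom_def)

lemma coset_hom: "a \<in> lhom L \<Longrightarrow> cs a \<in> lhom Q"
  by (simp add: quot_hom)

lemma crep_congruent:
  assumes "a \<in> C"
  shows "crep L N (cs a) \<in> C" "sb (crep L N (cs a)) a \<in> N"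
proof -
  have "crep L N (cs a) \<in> C \<and> cs a = cs (crep L N (cs a))"
    unfolding crep_def using someI[of "\<lambda>x. x \<in> C \<and> cs a = cs x" a] assms by auto
  then show "crep L N (cs a) \<in> C" "sb (crep L N (cs a)) a \<in> N"
    using assms coset_eq_iff by auto
qed

lemma coset_add:
  assumes "a \<in> C" "b \<in> C"
  shows "cs (a \<oplus> b) = ladd Q (cs a) (cs b)"
proof -
  let ?a = "crep L N (cs a)" and ?b = "crep L N (cs b)"
  have c: "?a \<in> C" "?b \<in> C" using crep_congruent assms by auto
  have "sb (?a \<oplus> ?b) (a \<oplus> b) = sb ?a a \<oplus> sb ?b b"
    using c assms by (simp add: sub_eq neg_add add_assoc add_commute add_left_commute)
  then have "sb (?a \<oplus> ?b) (a \<oplus> b) \<in> N" using crep_congruent assms N_add by simp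
  then have "cs (?a \<oplus> ?b) = cs (a \<oplus> b)" using c assms coset_eq_iff by simp
  then show ?thesis by (simp add: quot_def)
qed

lemma coset_smul:
  assumes "a \<in> C"
  shows "cs (sm c a) = lsmul Q c (cs a)"
proof -
  let ?a = "crep L N (cs a)"
  have c: "?a \<in> C" using crep_congruent assms by auto
  have "sb (sm c ?a) (sm c a) = sm c (sb ?a a)"
    using c assms by (simp add: sub_eq smul_add smul_neg)
  then have "sb (sm c ?a) (sm c a) \<in> N" using crep_congruent assms N_smul by simp
  then have "cs (sm c ?a) = cs (sm c a)" using c assms coset_eq_iff by simp
  then show ?thesis by (simp add: quot_def)
qed

lemma coset_br:
  assumes "a \<in> C" "b \<in> C"
  shows "cs (br a b) = lbr Q (cs a) (cs b)"
proof -
  let ?a = "crep L N (cs a)" and ?b = "crep L N (cs b)"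
  define n where "n = sb ?a a"
  define m where "m = sb ?b b"
  have c: "?a \<in> C" "?b \<in> C" and nm: "n \<in> N" "m \<in> N"
    using crep_congruent assms by (auto simp: n_def m_def)
  have an: "?a = a \<oplus> n" and bm: "?b = b \<oplus> m"
    using c assms by (simp_all add: n_def m_def add_sub_cancel)
  have "br ?a ?b = br a ?b \<oplus> br n ?b"
    using assms nm c by (subst an) (simp add: br_add_left)
  moreover have "br a ?b = br a b \<oplus> br a m"
    using assms nm by (subst bm) (simp add: br_add_right)
  ultimately have "br ?a ?b = br a b \<oplus> (br a m \<oplus> br n ?b)"
    using assms nm c by (simp add: add_assoc)
  then have "sb (br ?a ?b) (br a b) = br a m \<oplus> br n ?b"
    using assms nm c by (simp add: add_sub_cancel_left)
  then have "sb (br ?a ?b) (br a b) \<in> N"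
    using N_add br_N_right br_N_left nm assms c by simp
  then have "cs (br ?a ?b) = cs (br a b)" using c assms coset_eq_iff by simp
  then show ?thesis by (simp add: quot_def)
qed

lemma quot_even_odd_inter:
  assumes "X \<in> lev Q" "X \<in> lod Q"
  shows "X = cs z"
proof -
  obtain a b where ab: "a \<in> Ev" "b \<in> Od" "X = cs a" "X = cs b"
    using assms by (auto simp: quot_even quot_odd)
  then have "sb a b \<in> N" using coset_eq_iff[of a b] by simp
  then have "a \<in> Od \<or> b \<in> Ev \<or> a \<in> N"
    using hom_congruent_cases[of a b] ab by (auto simp: hom_iff)
  then show ?thesis
  proof (elim disjE)
    assume "a \<in> Od"
    then have "a = z" using ab even_odd_inter by blast
    then show ?thesis using ab by simp
  next
    assume "b \<in> Ev"
    then have "b = z" using ab even_odd_inter by blast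
    then show ?thesis using ab by simp
  next
    assume "a \<in> N"
    then show ?thesis using ab coset_eq_zero_iff by simp
  qed
qed

text \<open>The class of zero is both even and odd, so it is represented by zero itself; this keeps
  the parity of every homogeneous class.\<close>
definition rep :: "'a set \<Rightarrow> 'a" where
  "rep X = (if X = cs z then z
     else if X \<in> lev Q then (SOME a. a \<in> Ev \<and> cs a = X) else (SOME a. a \<in> Od \<and> cs a = X))"

lemma rep_even:
  assumes "X \<in> lev Q"
  shows "rep X \<in> Ev" "cs (rep X) = X"
proof -
  have "\<exists>a. a \<in> Ev \<and> cs a = X" using assms by (auto simp: quot_even)
  then have "(SOME a. a \<in> Ev \<and> cs a = X) \<in> Ev \<and> cs (SOME a. a \<in> Ev \<and> cs a = X) = X"
    by (rule someI_ex)
  then have "rep X \<in> Ev \<and> cs (rep X) = X"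
    using assms zero_even by (simp add: rep_def)
  then show "rep X \<in> Ev" "cs (rep X) = X" by simp_all
qed

lemma rep_odd:
  assumes "X \<in> lod Q"
  shows "rep X \<in> Od" "cs (rep X) = X"
proof -
  have "\<exists>a. a \<in> Od \<and> cs a = X" using assms by (auto simp: quot_odd)
  then have "(SOME a. a \<in> Od \<and> cs a = X) \<in> Od \<and> cs (SOME a. a \<in> Od \<and> cs a = X) = X"
    by (rule someI_ex)
  then have "rep X \<in> Od \<and> cs (rep X) = X"
    using assms zero_odd quot_even_odd_inter[of X] by (auto simp: rep_def)
  then show "rep X \<in> Od" "cs (rep X) = X" by simp_all
qed

lemma rep_hom: "X \<in> lhom Q \<Longrightarrow> rep X \<in> lhom L"
  using rep_even rep_odd by (auto simp: lhom_def hom_iff)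

lemma rep_closed [simp]: "X \<in> lhom Q \<Longrightarrow> rep X \<in> C"
  using rep_hom by simp

lemma coset_rep [simp]: "X \<in> lhom Q \<Longrightarrow> cs (rep X) = X"
  using rep_even rep_odd by (auto simp: lhom_def)

lemma rep_parity:
  "(X \<in> lev Q \<and> X' \<in> lev Q) \<or> (X \<in> lod Q \<and> X' \<in> lod Q) \<Longrightarrow>
   (rep X \<in> Ev \<and> rep X' \<in> Ev) \<or> (rep X \<in> Od \<and> rep X' \<in> Od)"
  using rep_even rep_odd by blast

lemma ldeg_rep [simp]:
  assumes "X \<in> lhom Q"
  shows "ldeg L (rep X) = ldeg Q X"
proof (cases "X \<in> lev Q")
  case True
  then show ?thesis using rep_even by (simp add: ldeg_def)
next
  case False
  then have odd: "X \<in> lod Q" using assms by (simp add: lhom_def)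
  have "rep X \<notin> Ev"
  proof
    assume "rep X \<in> Ev"
    then have "X \<in> lev Q" using rep_odd(2)[OF odd] by (metis image_eqI quot_even)
    then show False using False by simp
  qed
  then show ?thesis using False by (simp add: ldeg_def)
qed

lemma lsign_rep [simp]: "X \<in> lhom Q \<Longrightarrow> Y \<in> lhom Q \<Longrightarrow> lsign L (rep X) (rep Y) = lsign Q X Y"
  by (simp add: lsign_def)

definition rep_pair :: "'a set \<times> 'a set \<Rightarrow> 'a \<times> 'a" where
  "rep_pair P = (rep (fst P), rep (snd P))"

lemma rep_pair_hom: "P \<in> lhom Q \<times> lhom Q \<Longrightarrow> rep_pair P \<in> lhom L \<times> lhom L"
  by (auto simp: rep_pair_def rep_hom)

lemma cls_pair_hom: "p \<in> lhom L \<times> lhom L \<Longrightarrow> cls p \<in> lhom Q \<times> lhom Q"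
  by (auto simp: cls_pair_def coset_hom)

lemma cls_rep_pair [simp]: "P \<in> lhom Q \<times> lhom Q \<Longrightarrow> cls (rep_pair P) = P"
  by (auto simp: cls_pair_def rep_pair_def)

lemma pdeg_rep_pair [simp]: "P \<in> lhom Q \<times> lhom Q \<Longrightarrow> pdeg L (rep_pair P) = pdeg Q P"
  by (auto simp: rep_pair_def pdeg_def)

lemma vmap_cls_rep_pair:
  assumes "F \<in> VL Q"
  shows "vmap cls (vmap rep_pair F) = F"
  using assms by (simp add: vmap_vmap VL_iff) (intro vmap_id_on; auto)

text \<open>The sign in \<open>vbr\<close> depends on the degrees of the left factor. Representatives chosen
  by \<open>rep\<close> have the degrees of their classes, which arbitrary representatives need not.\<close>
lemma vmap_cls_vbr:
  assumes F: "F \<in> VL Q" and g: "finite (supp g)" "supp g \<subseteq> C \<times> C"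
  shows "vmap cls (vbr L (vmap rep_pair F) g) = vbr Q F (vmap cls g)"
proof -
  have fin: "finite (supp F)" and hom: "supp F \<subseteq> lhom Q \<times> lhom Q"
    using F by (auto simp: VL_iff)
  have "vmap cls (vbr L (vmap rep_pair F) g) = vbr Q (vmap cls (vmap rep_pair F)) (vmap cls g)"
  proof (rule vmap_vbr)
    fix p assume "p \<in> supp (vmap rep_pair F)"
    then obtain P where P: "P \<in> lhom Q \<times> lhom Q" "p = rep_pair P"
      using supp_vmap[of rep_pair F] hom by blast
    then show "lsign Q (fst (cls p)) (snd (cls p)) = lsign L (fst p) (snd p)"
      by (auto simp: rep_pair_def cls_pair_def)
    fix t assume "t \<in> supp g"
    then show "cls (br_pair L p t) = br_pair Q (cls p) (cls t)"
      using P g by (auto simp: cls_pair_def br_pair_def rep_pair_def coset_br)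
  qed (use fin g in simp_all)
  then show ?thesis using vmap_cls_rep_pair[OF F] by simp
qed

lemma vmap_cls_vbr_vunit:
  assumes "P \<in> lhom Q \<times> lhom Q" "finite (supp g)" "supp g \<subseteq> C \<times> C"
  shows "vmap cls (vbr L (vunit (rep_pair P)) g) = vbr Q (vunit P) (vmap cls g)"
  using vmap_cls_vbr[of "vunit P" g] assms by (simp add: VL_iff)

lemma rep_pair_closed: "P \<in> lhom Q \<times> lhom Q \<Longrightarrow> rep_pair P \<in> C \<times> C"
  using rep_pair_hom[of P] by auto

lemma vmap_cls_vbr_units:
  assumes P: "P \<in> lhom Q \<times> lhom Q" and T: "T \<in> lhom Q \<times> lhom Q"
  shows "vmap cls (vbr L (vunit (rep_pair P)) (vunit (rep_pair T))) = vbr Q (vunit P) (vunit T)"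
  using vmap_cls_vbr_vunit[OF P, of "vunit (rep_pair T)"] rep_pair_closed[OF T] T by simp

lemma vmap_cls_vbr_vbr_units:
  assumes P: "P \<in> lhom Q \<times> lhom Q" and T: "T \<in> lhom Q \<times> lhom Q" and U: "U \<in> lhom Q \<times> lhom Q"
  shows "vmap cls (vbr L (vunit (rep_pair P)) (vbr L (vunit (rep_pair T)) (vunit (rep_pair U))))
    = vbr Q (vunit P) (vbr Q (vunit T) (vunit U))"
proof -
  have "supp (vbr L (vunit (rep_pair T)) (vunit (rep_pair U))) \<subseteq> C \<times> C"
    using rep_pair_closed[OF T] rep_pair_closed[OF U] by (intro supp_vbr_carrier) auto
  then show ?thesis
    using vmap_cls_vbr_vunit[OF P, of "vbr L (vunit (rep_pair T)) (vunit (rep_pair U))"]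
      vmap_cls_vbr_units[OF T U] by simp
qed

lemmas vmap_cls_simps =
  vmap_vadd vmap_vsmul cls_pair_def vunit_def coset_add coset_smul coset_br

lemma quot_rel_add_left_image:
  assumes XX': "(X \<in> lev Q \<and> X' \<in> lev Q) \<or> (X \<in> lod Q \<and> X' \<in> lod Q)" and Y: "Y \<in> lhom Q"
  shows "\<exists>R\<in>wedge_ideal L. vmap cls R =
    vadd (vsym (ladd Q X X') Y) (vsmul (-1) (vadd (vsym X Y) (vsym X' Y)))"
  using XX' Y
  by (intro bexI[OF _ wedge_rel_add_left[OF rep_parity[OF XX'] rep_hom[OF Y]]])
     (auto simp: vmap_cls_simps lhom_def)

lemma quot_rel_add_right_image:
  assumes XX': "(X \<in> lev Q \<and> X' \<in> lev Q) \<or> (X \<in> lod Q \<and> X' \<in> lod Q)" and Y: "Y \<in> lhom Q"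
  shows "\<exists>R\<in>wedge_ideal L. vmap cls R =
    vadd (vsym Y (ladd Q X X')) (vsmul (-1) (vadd (vsym Y X) (vsym Y X')))"
  using XX' Y
  by (intro bexI[OF _ wedge_rel_add_right[OF rep_parity[OF XX'] rep_hom[OF Y]]])
     (auto simp: vmap_cls_simps lhom_def)

lemma quot_rel_smul_left_image:
  assumes X: "X \<in> lhom Q" and Y: "Y \<in> lhom Q"
  shows "\<exists>R\<in>wedge_ideal L. vmap cls R = vadd (vsym (lsmul Q c X) Y) (vsmul (- c) (vsym X Y))"
  using X Y
  by (intro bexI[OF _ wedge_rel_smul_left[OF rep_hom[OF X] rep_hom[OF Y], where c = c]])
     (simp add: vmap_cls_simps)

lemma quot_rel_smul_right_image:
  assumes X: "X \<in> lhom Q" and Y: "Y \<in> lhom Q"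
  shows "\<exists>R\<in>wedge_ideal L. vmap cls R = vadd (vsym X (lsmul Q c Y)) (vsmul (- c) (vsym X Y))"
  using X Y
  by (intro bexI[OF _ wedge_rel_smul_right[OF rep_hom[OF X] rep_hom[OF Y], where c = c]])
     (simp add: vmap_cls_simps)

lemma quot_rel_br_left_image:
  assumes X: "X \<in> lhom Q" and X': "X' \<in> lhom Q" and Y: "Y \<in> lhom Q"
  shows "\<exists>R\<in>wedge_ideal L. vmap cls R =
    vadd (vsym (lbr Q X X') Y)
      (vadd (vsmul (-1) (vsym X (lbr Q X' Y))) (vsmul (lsign Q X X') (vsym X' (lbr Q X Y))))"
  using X X' Y
  by (intro bexI[OF _ wedge_rel_br_left[OF rep_hom[OF X] rep_hom[OF X'] rep_hom[OF Y]]])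
     (simp add: vmap_cls_simps)

lemma quot_rel_br_right_image:
  assumes X: "X \<in> lhom Q" and Y: "Y \<in> lhom Q" and Y': "Y' \<in> lhom Q"
  shows "\<exists>R\<in>wedge_ideal L. vmap cls R =
    vadd (vsym X (lbr Q Y Y'))
      (vadd (vsmul (- ((-1) ^ (ldeg Q Y' * (ldeg Q X + ldeg Q Y)))) (vsym (lbr Q Y' X) Y))
            (vsmul (lsign Q X Y) (vsym (lbr Q Y X) Y')))"
  using X Y Y'
  by (intro bexI[OF _ wedge_rel_br_right[OF rep_hom[OF X] rep_hom[OF Y] rep_hom[OF Y']]])
     (simp add: vmap_cls_simps)

lemma quot_rel_swap_image:
  assumes X: "X \<in> lhom Q" and Y: "Y \<in> lhom Q"
  shows "\<exists>R\<in>wedge_ideal L. vmap cls R = vadd (vsym X Y) (vsmul (lsign Q X Y) (vsym Y X))"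
  using X Y
  by (intro bexI[OF _ wedge_rel_swap[OF rep_hom[OF X] rep_hom[OF Y]]])
     (simp add: vmap_cls_simps)

lemma quot_rel_even_square_image:
  assumes X: "X \<in> lev Q"
  shows "\<exists>R\<in>wedge_ideal L. vmap cls R = vsym X X"
  using rep_even[OF X]
  by (intro bexI[OF _ wedge_rel_even_square[of "rep X"]]) (simp_all add: cls_pair_def vunit_def)

lemma quot_rel_super_skew_image:
  assumes P: "P \<in> lhom Q \<times> lhom Q" and T: "T \<in> lhom Q \<times> lhom Q"
  shows "\<exists>R\<in>wedge_ideal L. vmap cls R =
    vadd (vbr Q (vunit P) (vunit T)) (vsmul ((-1) ^ (pdeg Q P * pdeg Q T)) (vbr Q (vunit T) (vunit P)))"
  using P T
  by (intro bexI[OF _ wedge_rel_super_skew[OF rep_pair_hom[OF P] rep_pair_hom[OF T]]])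
     (simp add: vmap_vadd vmap_vsmul vmap_cls_vbr_units)

lemma quot_rel_super_jacobi_image:
  assumes P: "P \<in> lhom Q \<times> lhom Q" and T: "T \<in> lhom Q \<times> lhom Q" and U: "U \<in> lhom Q \<times> lhom Q"
  shows "\<exists>R\<in>wedge_ideal L. vmap cls R =
    vadd (vadd (vsmul ((-1) ^ (pdeg Q P * pdeg Q U)) (vbr Q (vunit P) (vbr Q (vunit T) (vunit U))))
               (vsmul ((-1) ^ (pdeg Q T * pdeg Q P)) (vbr Q (vunit T) (vbr Q (vunit U) (vunit P)))))
         (vsmul ((-1) ^ (pdeg Q U * pdeg Q T)) (vbr Q (vunit U) (vbr Q (vunit P) (vunit T))))"
  using P T U
  by (intro bexI[OF _ wedge_rel_super_jacobi[OF rep_pair_hom[OF P] rep_pair_hom[OF T]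
        rep_pair_hom[OF U]]])
     (simp add: vmap_vadd vmap_vsmul vmap_cls_vbr_vbr_units)

lemma quot_generator_image:
  assumes "G \<in> tens_rels Q \<union> lsa_rels Q \<union> box_rels Q"
  shows "\<exists>R\<in>wedge_ideal L. vmap cls R = G"
  using assms unfolding tens_rels_def lsa_rels_def box_rels_def Let_def vunit_def[symmetric]
  by (elim UnE CollectE exE conjE; hypsubst)
     (blast intro: quot_rel_add_left_image quot_rel_add_right_image quot_rel_smul_left_image
        quot_rel_smul_right_image quot_rel_br_left_image quot_rel_br_right_image
        quot_rel_swap_image quot_rel_even_square_image quot_rel_super_skew_image
        quot_rel_super_jacobi_image)+

lemma VL_carrier: "f \<in> VL L \<Longrightarrow> supp f \<subseteq> C \<times> C"
  by (auto simp: VL_iff)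

lemma VL_vmap_cls: "R \<in> VL L \<Longrightarrow> vmap cls R \<in> VL Q"
  by (rule VL_vmap[OF _ cls_pair_hom])

lemma VL_vmap_rep_pair: "F \<in> VL Q \<Longrightarrow> vmap rep_pair F \<in> VL L"
  by (rule VL_vmap[OF _ rep_pair_hom])

lemma vsym_zero_class_quot:
  assumes Y: "Y \<in> lhom Q"
  shows "vsym (cs z) Y \<in> wedge_ideal Q"
proof -
  have "vadd (vsym (lsmul Q 0 (cs z)) Y) (vsmul (- 0) (vsym (cs z) Y)) \<in> wedge_ideal Q"
    using wedge_rel_smul_left[OF coset_hom[OF zero_hom] Y] .
  moreover have "lsmul Q 0 (cs z) = cs z" using coset_smul[of z 0] by simp
  ultimately show ?thesis by (simp add: vadd_def vsmul_def)
qed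

lemma ext_central_if_nat_wedge_map_mono:
  assumes mono: "nat_wedge_map_mono L N"
  shows "N \<subseteq> ext_center L"
proof
  fix n assume n: "n \<in> N"
  have "wedge_elt L n y \<in> wedge_ideal L" if y: "y \<in> C" for y
  proof -
    let ?n0 = "comp0 L n" and ?n1 = "comp1 L n" and ?y0 = "comp0 L y" and ?y1 = "comp1 L y"
    have hom: "?n0 \<in> lhom L" "?n1 \<in> lhom L" "?y0 \<in> lhom L" "?y1 \<in> lhom L"
      using comp_decomp[of n] comp_decomp[OF y] n by (auto simp: hom_iff)
    have VL: "wedge_elt L n y \<in> VL L"
      unfolding wedge_elt_def using hom by (intro VL_vadd VL_vsym)
    have "cs ?n0 = cs z" "cs ?n1 = cs z"
      using n N_comp0 N_comp1 coset_eq_zero_iff by auto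
    then have "nat_push L N (wedge_elt L n y) =
      vadd (vadd (vsym (cs z) (cs ?y0)) (vsym (cs z) (cs ?y1)))
           (vadd (vsym (cs z) (cs ?y0)) (vsym (cs z) (cs ?y1)))"
      using VL by (simp add: nat_push_eq_vmap VL_iff wedge_elt_def vmap_vadd cls_pair_def vunit_def)
    also have "\<dots> \<in> wedge_ideal Q"
      using vsym_zero_class_quot coset_hom hom by (intro wedge_ideal_vadd) auto
    finally show ?thesis using mono VL by (simp add: nat_wedge_map_mono_def)
  qed
  then show "n \<in> ext_center L" using n by (simp add: ext_center_def)
qed

end

section \<open>Lifting relations of the quotient\<close>

locale lsa_ext_central_ideal = lsa_graded_ideal +
  assumes ext_central: "N \<subseteq> ext_center L"
begin

lemma vsym_N_left:
  assumes "n \<in> N" "n \<in> lhom L" "y \<in> lhom L"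
  shows "vsym n y \<in> wedge_ideal L"
proof -
  have "wedge_elt L n y \<in> wedge_ideal L"
    using ext_central assms by (auto simp: ext_center_def)
  then have "vsub (wedge_elt L n y) (vsub (wedge_elt L n y) (vsym n y)) \<in> wedge_ideal L"
    using wedge_ideal_vsub wedge_elt_hom_congruent[OF assms(2,3)] by blast
  then show ?thesis by (simp add: vsub_vsub_cancel)
qed

lemma vsym_N_right:
  assumes n: "n \<in> N" "n \<in> lhom L" and y: "y \<in> lhom L"
  shows "vsym y n \<in> wedge_ideal L"
proof -
  have "vsub (vadd (vsym y n) (vsmul (lsign L y n) (vsym n y))) (vsmul (lsign L y n) (vsym n y))
    \<in> wedge_ideal L"
    using wedge_rel_swap[OF y n(2)] vsym_N_left[OF n y] by (simp add: wedge_ideal_vsub wedge_ideal_vsmul)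
  then show ?thesis by (simp add: vsub_def vadd_def vsmul_def)
qed

lemma vsym_cong_left:
  assumes a: "a \<in> lhom L" "a' \<in> lhom L" "cs a = cs a'" and b: "b \<in> lhom L"
  shows "vsub (vsym a b) (vsym a' b) \<in> wedge_ideal L"
proof -
  let ?n = "sb a a'"
  have n: "?n \<in> N" using a coset_eq_iff by simp
  from hom_congruent_cases[OF a(1,2) n] consider
      "(a' \<in> Ev \<and> ?n \<in> Ev) \<or> (a' \<in> Od \<and> ?n \<in> Od)" | "a \<in> N" "a' \<in> N"
    by blast
  then show ?thesis
  proof cases
    case 1
    then have "vadd (vsym (ladd L a' ?n) b) (vsmul (-1) (vadd (vsym a' b) (vsym ?n b)))
      \<in> wedge_ideal L" using wedge_rel_add_left[OF _ b] by blast
    moreover have "vsym ?n b \<in> wedge_ideal L"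
      using 1 n b vsym_N_left by (auto simp: hom_iff)
    ultimately have "vadd (vadd (vsym (ladd L a' ?n) b) (vsmul (-1) (vadd (vsym a' b) (vsym ?n b))))
        (vsym ?n b) \<in> wedge_ideal L"
      by (rule wedge_ideal_vadd)
    moreover have "ladd L a' ?n = a" using a by (simp add: add_sub_cancel)
    ultimately show ?thesis by (simp add: vsub_def vadd_def vsmul_def)
  next
    case 2
    then show ?thesis using vsym_N_left a b by (simp add: wedge_ideal_vsub)
  qed
qed

lemma vsym_cong_right:
  assumes a: "a \<in> lhom L" "a' \<in> lhom L" "cs a = cs a'" and b: "b \<in> lhom L"
  shows "vsub (vsym b a) (vsym b a') \<in> wedge_ideal L"
proof -
  let ?n = "sb a a'"
  have n: "?n \<in> N" using a coset_eq_iff by simp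
  from hom_congruent_cases[OF a(1,2) n] consider
      "(a' \<in> Ev \<and> ?n \<in> Ev) \<or> (a' \<in> Od \<and> ?n \<in> Od)" | "a \<in> N" "a' \<in> N"
    by blast
  then show ?thesis
  proof cases
    case 1
    then have "vadd (vsym b (ladd L a' ?n)) (vsmul (-1) (vadd (vsym b a') (vsym b ?n)))
      \<in> wedge_ideal L" using wedge_rel_add_right[OF _ b] by blast
    moreover have "vsym b ?n \<in> wedge_ideal L"
      using 1 n b vsym_N_right by (auto simp: hom_iff)
    ultimately have "vadd (vadd (vsym b (ladd L a' ?n)) (vsmul (-1) (vadd (vsym b a') (vsym b ?n))))
        (vsym b ?n) \<in> wedge_ideal L"
      by (rule wedge_ideal_vadd)
    moreover have "ladd L a' ?n = a" using a by (simp add: add_sub_cancel)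
    ultimately show ?thesis by (simp add: vsub_def vadd_def vsmul_def)
  next
    case 2
    then show ?thesis using vsym_N_right a b by (simp add: wedge_ideal_vsub)
  qed
qed

lemma vsym_cong:
  assumes "a \<in> lhom L" "a' \<in> lhom L" "cs a = cs a'" "b \<in> lhom L" "b' \<in> lhom L" "cs b = cs b'"
  shows "vsub (vsym a b) (vsym a' b') \<in> wedge_ideal L"
proof -
  have "vadd (vsub (vsym a b) (vsym a' b)) (vsub (vsym a' b) (vsym a' b')) \<in> wedge_ideal L"
    using assms by (intro wedge_ideal_vadd vsym_cong_left vsym_cong_right)
  then show ?thesis by (simp add: vsub_def vadd_def)
qed

lemma vsub_vmap_rep_cls:
  assumes f: "f \<in> VL L"
  shows "vsub f (vmap rep_pair (vmap cls f)) \<in> wedge_ideal L"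
proof -
  have fin: "finite (supp f)" and hom: "supp f \<subseteq> lhom L \<times> lhom L"
    using f by (auto simp: VL_iff)
  have "vsub f (vmap rep_pair (vmap cls f))
      = vsum (supp f) (\<lambda>p. vsmul (f p) (vsub (vunit p) (vunit (rep_pair (cls p)))))"
  proof
    fix q
    have "f q = vsum (supp f) (\<lambda>p. vsmul (f p) (vunit p)) q"
      using vsum_expand[OF fin subset_refl] by metis
    then show "vsub f (vmap rep_pair (vmap cls f)) q
      = vsum (supp f) (\<lambda>p. vsmul (f p) (vsub (vunit p) (vunit (rep_pair (cls p))))) q"
      using fin by (simp add: vmap_vmap vmap_def[of "rep_pair \<circ> cls"] vsub_def vsum_def vsmul_def
          sum_subtractf right_diff_distrib)
  qed
  moreover have "vsub (vunit p) (vunit (rep_pair (cls p))) \<in> wedge_ideal L" if "p \<in> supp f" for p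
  proof -
    have "fst p \<in> lhom L" "snd p \<in> lhom L" using that hom by auto
    then show ?thesis
      using coset_hom by (auto simp: vunit_def rep_pair_def cls_pair_def intro!: vsym_cong rep_hom)
  qed
  ultimately show ?thesis
    using fin by (simp add: wedge_ideal_vsum wedge_ideal_zero wedge_ideal_vsmul)
qed

lemma vmap_rep_cls_wedge_ideal:
  assumes "R \<in> wedge_ideal L"
  shows "vmap rep_pair (vmap cls R) \<in> wedge_ideal L"
proof -
  have "R \<in> VL L" using assms wedge_ideal_subset_VL by blast
  then have "vsub R (vsub R (vmap rep_pair (vmap cls R))) \<in> wedge_ideal L"
    using wedge_ideal_vsub[OF assms vsub_vmap_rep_cls] by blast
  then show ?thesis by (simp add: vsub_vsub_cancel)
qed

lemma quot_wedge_ideal_image: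
  assumes "G \<in> wedge_ideal Q"
  shows "\<exists>R\<in>wedge_ideal L. vmap cls R = G"
proof -
  have "G \<in> gen_ideal Q (tens_rels Q \<union> lsa_rels Q \<union> box_rels Q)"
    using assms by (simp add: wedge_ideal_def)
  then show ?thesis
  proof (induction rule: gen_ideal.induct)
    case (gen g)
    then show ?case by (rule quot_generator_image)
  next
    case (add f g)
    then obtain R S where R: "R \<in> wedge_ideal L" "vmap cls R = f"
      and S: "S \<in> wedge_ideal L" "vmap cls S = g"
      by blast
    have "finite (supp R)" "finite (supp S)"
      using R S wedge_ideal_subset_VL by (auto simp: VL_iff)
    then show ?case
      using R S by (intro bexI[of _ "vadd R S"]) (simp_all add: vmap_vadd wedge_ideal_vadd)
  next
    case (smul f c)
    then obtain R where R: "R \<in> wedge_ideal L" "vmap cls R = f" by blast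
    have "finite (supp R)"
      using R wedge_ideal_subset_VL by (auto simp: VL_iff)
    then show ?case
      using R by (intro bexI[of _ "vsmul c R"]) (simp_all add: vmap_vsmul wedge_ideal_vsmul)
  next
    case (brl f w)
    then obtain R where R: "R \<in> wedge_ideal L" "vmap cls R = f" by blast
    have f: "f \<in> VL Q" "vmap rep_pair f \<in> wedge_ideal L"
      using R wedge_ideal_subset_VL VL_vmap_cls vmap_rep_cls_wedge_ideal by auto
    let ?B = "vbr L (vmap rep_pair w) (vmap rep_pair f)"
    have "?B \<in> wedge_ideal L"
      using f brl.hyps(2) by (intro wedge_ideal_vbr_left VL_vmap_rep_pair)
    moreover have "vmap cls ?B = vbr Q w f"
      using vmap_cls_vbr[OF brl.hyps(2), of "vmap rep_pair f"] f VL_vmap_rep_pair[OF f(1)]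
      by (simp add: VL_carrier VL_iff vmap_cls_rep_pair)
    ultimately show ?case by blast
  next
    case (brr f w)
    then obtain R where R: "R \<in> wedge_ideal L" "vmap cls R = f" by blast
    have f: "f \<in> VL Q" "vmap rep_pair f \<in> wedge_ideal L"
      using R wedge_ideal_subset_VL VL_vmap_cls vmap_rep_cls_wedge_ideal by auto
    let ?B = "vbr L (vmap rep_pair f) (vmap rep_pair w)"
    have "?B \<in> wedge_ideal L"
      using f brr.hyps(2) by (intro wedge_ideal_vbr_right VL_vmap_rep_pair)
    moreover have "vmap cls ?B = vbr Q f w"
      using vmap_cls_vbr[OF f(1), of "vmap rep_pair w"] brr.hyps(2) VL_vmap_rep_pair[OF brr.hyps(2)]
      by (simp add: VL_carrier VL_iff vmap_cls_rep_pair)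
    ultimately show ?case by blast
  qed
qed

lemma nat_wedge_map_mono: "nat_wedge_map_mono L N"
  unfolding nat_wedge_map_mono_def
proof (intro ballI impI)
  fix f assume f: "f \<in> VL L" and push: "nat_push L N f \<in> wedge_ideal Q"
  have "vmap cls f \<in> wedge_ideal Q"
    using push f by (simp add: nat_push_eq_vmap VL_iff)
  then obtain R where "R \<in> wedge_ideal L" "vmap cls R = vmap cls f"
    using quot_wedge_ideal_image by blast
  then have "vmap rep_pair (vmap cls f) \<in> wedge_ideal L"
    using vmap_rep_cls_wedge_ideal by metis
  then show "f \<in> wedge_ideal L"
    using wedge_ideal_vsub_cancel[OF vsub_vmap_rep_cls[OF f]] by blast
qed

end

theorem mainTheorem15:
  fixes L :: "('k::field, 'a) lsa" and N :: "'a set"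
  assumes "is_lsa L"
    and "(2::'k) \<noteq> 0" and "(3::'k) \<noteq> 0"
    and "graded_ideal L N"
  shows "N \<subseteq> ext_center L \<longleftrightarrow> nat_wedge_map_mono L N"
proof -
  interpret lsa_graded_ideal L N
    using assms(1,4) by unfold_locales
  show ?thesis
  proof
    assume "N \<subseteq> ext_center L"
    then interpret lsa_ext_central_ideal L N
      by unfold_locales
    show "nat_wedge_map_mono L N"
      by (rule nat_wedge_map_mono)
  next
    assume "nat_wedge_map_mono L N"
    then show "N \<subseteq> ext_center L"
      by (rule ext_central_if_nat_wedge_map_mono)
  qed
qed

end
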